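(* Let $r\ge 3$ be fixed, $r\mid n$, and let $\varepsilon>0$ be a sufficiently small constant. Let $p_1=(1+\varepsilon)p_r$ and consider $G^{(r)}_{n,p_1}$. With high probability: (a) $|V_\sigma|\le n^{1-\theta}$ where $\theta=\frac{\varepsilon}{2r\alpha_r}$; (b) no set of at most $\log\log n$ vertices inducing a connected subgraph of $G^{(r)}_{n,p_1}$ contains more than $r\alpha_r$ vertices of $V_\sigma$; (c) every $S\subseteq[n]$ with $|S|\le n/\log^2 n$ spans at most $100|S|$ edges of $G^{(r)}_{n,p_1}$.
   Context: $G^{(r)}_{n,p}$ is the random graph on $[n]$ in which each edge is present independently with probability $p$, and each present edge independently receives a uniformly random color from $[r]$. Logarithms are natural. $\alpha_r=\lceil r/2\rceil$, $p_r=\frac{r}{\alpha_r}\frac{\log n}{n}$. Partition $[n]$ into $V_i=\{(i-1)n/r+1,\dots,in/r\}$, $i\in[r]$, with indices taken cyclically modulo $r$ (so $V_0=V_r$, $V_{r+1}=V_1$, and similarly for colors). For a vertex $v$ and $i\in[r]$, $d_i^+(v)$ is the number of $w\in V_{i+1}$ such that $vw$ is an edge of color $i+1$, and $d_i^-(v)$ is the number of $w\in V_{i-1}$ such that $vw$ is an edge of color $i-1$. Let $\eta_0=\varepsilon^2/r$, let $\eta_1$ be the solution of $\eta_1\log\frac{e(1+\varepsilon)}{r\eta_1\alpha_r}=\frac{1}{r\alpha_r}$, let $\eta_2$ be the solution of $\eta_2\log\frac{3er(1+\varepsilon)}{\eta_2\alpha_r}=\frac{1}{3\alpha_r}$ (in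 each case the small positive solution), and $\eta=\min\{\eta_0,\eta_1,\eta_2\}$. A vertex $v$ is large if $d_i^+(v)\ge\eta\log n$ and $d_i^-(v)\ge\eta\log n$ for all $i\in[r]$, and small otherwise; $V_\sigma$ is the set of small vertices. "With high probability" means with probability $1-o(1)$ as $n\to\infty$. *)

theory Defs
  imports "HOL-Probability.Probability"
begin

text \<open>Colored random graph on [n] = {1..n}. An outcome is a function on ordered pairs (i,j)
 with 1 <= i < j <= n: None = no edge, Some c = edge of colour c in {1..r}.\<close>

definition edge_pairs :: "nat \<Rightarrow> (nat \<times> nat) set" where
  "edge_pairs n = {(i, j). 1 \<le> i \<and> i < j \<and> j \<le> n}"

definition edge_dist :: "real \<Rightarrow> nat \<Rightarrow> nat option pmf" where
  "edge_dist p r = bernoulli_pmf p \<bind>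
     (\<lambda>b. if b then map_pmf Some (pmf_of_set {1..r}) else return_pmf None)"

definition Gnp_col :: "nat \<Rightarrow> real \<Rightarrow> nat \<Rightarrow> ((nat \<times> nat) \<Rightarrow> nat option) pmf" where
  "Gnp_col n p r = Pi_pmf (edge_pairs n) None (\<lambda>_. edge_dist p r)"

type_synonym cgraph = "(nat \<times> nat) \<Rightarrow> nat option"

definition col :: "cgraph \<Rightarrow> nat \<Rightarrow> nat \<Rightarrow> nat option" where
  "col G v w = (if v = w then None else G (min v w, max v w))"

definition adj :: "cgraph \<Rightarrow> nat \<Rightarrow> nat \<Rightarrow> bool" where
  "adj G v w \<longleftrightarrow> col G v w \<noteq> None"

definition alpha_r :: "nat \<Rightarrow> nat" where
  "alpha_r r = (r + 1) div 2"

definition p_r :: "nat \<Rightarrow> nat \<Rightarrow> real" where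
  "p_r r n = real r / real (alpha_r r) * ln (real n) / real n"

definition part :: "nat \<Rightarrow> nat \<Rightarrow> nat \<Rightarrow> nat set" where
  "part n r i = {v. (i - 1) * (n div r) < v \<and> v \<le> i * (n div r)}"

definition csucc :: "nat \<Rightarrow> nat \<Rightarrow> nat" where
  "csucc r i = (if i = r then 1 else i + 1)"

definition cpred :: "nat \<Rightarrow> nat \<Rightarrow> nat" where
  "cpred r i = (if i = 1 then r else i - 1)"

definition dplus :: "cgraph \<Rightarrow> nat \<Rightarrow> nat \<Rightarrow> nat \<Rightarrow> nat \<Rightarrow> nat" where
  "dplus G n r i v = card {w \<in> part n r (csucc r i). col G v w = Some (csucc r i)}"

definition dminus :: "cgraph \<Rightarrow> nat \<Rightarrow> nat \<Rightarrow> nat \<Rightarrow> nat \<Rightarrow> nat" where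
  "dminus G n r i v = card {w \<in> part n r (cpred r i). col G v w = Some (cpred r i)}"

text \<open>The small positive solution of x * ln (C / x) = b: the unique solution in (0, C/e)
  (x ln(C/x) is strictly increasing there).\<close>
definition small_sol :: "real \<Rightarrow> real \<Rightarrow> real" where
  "small_sol C b = (THE x. 0 < x \<and> x < C / exp 1 \<and> x * ln (C / x) = b)"

definition eta0 :: "real \<Rightarrow> nat \<Rightarrow> real" where
  "eta0 \<epsilon> r = \<epsilon>\<^sup>2 / real r"

definition eta1 :: "real \<Rightarrow> nat \<Rightarrow> real" where
  "eta1 \<epsilon> r = small_sol (exp 1 * (1 + \<epsilon>) / (real r * real (alpha_r r)))
                          (1 / (real r * real (alpha_r r)))"

definition eta2 :: "real \<Rightarrow> nat \<Rightarrow> real" where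
  "eta2 \<epsilon> r = small_sol (3 * exp 1 * real r * (1 + \<epsilon>) / real (alpha_r r))
                          (1 / (3 * real (alpha_r r)))"

definition eta :: "real \<Rightarrow> nat \<Rightarrow> real" where
  "eta \<epsilon> r = min (eta0 \<epsilon> r) (min (eta1 \<epsilon> r) (eta2 \<epsilon> r))"

definition large :: "real \<Rightarrow> cgraph \<Rightarrow> nat \<Rightarrow> nat \<Rightarrow> nat \<Rightarrow> bool" where
  "large \<epsilon> G n r v \<longleftrightarrow> (\<forall>i\<in>{1..r}.
      real (dplus G n r i v) \<ge> eta \<epsilon> r * ln (real n) \<and>
      real (dminus G n r i v) \<ge> eta \<epsilon> r * ln (real n))"

definition small_set :: "real \<Rightarrow> cgraph \<Rightarrow> nat \<Rightarrow> nat \<Rightarrow> nat set" where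
  "small_set \<epsilon> G n r = {v \<in> {1..n}. \<not> large \<epsilon> G n r v}"

definition induced_connected :: "cgraph \<Rightarrow> nat set \<Rightarrow> bool" where
  "induced_connected G S \<longleftrightarrow>
     (\<forall>u\<in>S. \<forall>v\<in>S. (\<lambda>x y. x \<in> S \<and> y \<in> S \<and> adj G x y)\<^sup>*\<^sup>* u v)"

definition spanned_edges :: "cgraph \<Rightarrow> nat set \<Rightarrow> nat" where
  "spanned_edges G S = card {(i, j). i \<in> S \<and> j \<in> S \<and> i < j \<and> G (i, j) \<noteq> None}"

end

theory Submission
  imports Defs "HOL-Real_Asymp.Real_Asymp"
begin

text \<open>A vertex is small only if, for some colour \<open>j\<close>, its colour-\<open>j\<close> degree into \<open>V\<^sub>j\<close> is at
  most \<open>t = \<epsilon>\<^sup>2 ln n / r\<close> (only \<open>\<eta> \<le> \<eta>\<^sub>0\<close> is used). This degree is a sum of independent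
  indicators with mean about \<open>(1 + \<epsilon>) ln n / (r \<alpha>\<^sub>r)\<close>, and an exponential-moment bound with a
  small weight \<open>x\<close> shows that such a deficit has probability at most
  \<open>n ^ (-(1 + \<epsilon>)(1 - x) / (r \<alpha>\<^sub>r) + O(\<epsilon>\<^sup>2))\<close>.
  (a) follows by Markov's inequality for the number of small vertices.
  (b) A connected set \<open>S\<close> containing \<open>r \<alpha>\<^sub>r + 1\<close> small vertices contains a spanning tree, i.e.
  \<open>|S| - 1\<close> present pairs inside \<open>S\<close>, and \<open>r \<alpha>\<^sub>r + 1\<close> vertices with few neighbours outside \<open>S\<close>.
  These events concern disjoint sets of pairs, so their probabilities multiply, and the resulting
  factor \<open>n ^ (-1 - \<delta>)\<close> beats the union bound over \<open>S\<close>, the tree, the small vertices and their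
  colours, which costs only \<open>n (ln n) ^ O(ln ln n)\<close>.
  (c) The expected number of sets of size \<open>s\<close> spanning \<open>100 s + 1\<close> edges is at most
  \<open>(n choose s) (s\<^sup>2 choose 100 s + 1) p ^ (100 s + 1) \<le> (c ^ 100 / (ln n) ^ 98) ^ s\<close>, a geometric series.\<close>

section \<open>The coloured random graph as a product measure\<close>

lemma set_pmf_edge_dist: "r \<ge> 1 \<Longrightarrow> set_pmf (edge_dist p r) \<subseteq> insert None (Some ` {1..r})"
  by (auto simp: edge_dist_def split: if_splits)

lemma pmf_edge_dist_None:
  assumes "0 \<le> p" "p \<le> 1" "r \<ge> 1"
  shows "pmf (edge_dist p r) None = 1 - p"
  using assms by (simp add: edge_dist_def pmf_bind pmf_map vimage_def)

lemma pmf_edge_dist_Some: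
  assumes "0 \<le> p" "p \<le> 1" "r \<ge> 1"
  shows "pmf (edge_dist p r) (Some c) = p * indicator {1..r} c / r"
  using assms by (simp add: edge_dist_def pmf_bind pmf_map vimage_def measure_pmf_single indicator_def)

lemma expectation_edge_dist:
  fixes f :: "nat option \<Rightarrow> real"
  assumes "0 \<le> p" "p \<le> 1" "r \<ge> 1"
  shows "measure_pmf.expectation (edge_dist p r) f = (1 - p) * f None + p / r * (\<Sum>c\<in>{1..r}. f (Some c))"
proof -
  have "measure_pmf.expectation (edge_dist p r) f = (\<Sum>a\<in>insert None (Some ` {1..r}). f a * pmf (edge_dist p r) a)"
    by (rule integral_measure_pmf_real) (use set_pmf_edge_dist[OF assms(3), of p] in auto)
  also have "\<dots> = f None * (1 - p) + (\<Sum>a\<in>Some ` {1..r}. f a * pmf (edge_dist p r) a)"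
    by (subst sum.insert) (auto simp: pmf_edge_dist_None[OF assms])
  also have "(\<Sum>a\<in>Some ` {1..r}. f a * pmf (edge_dist p r) a) = (\<Sum>c\<in>{1..r}. f (Some c) * (p / r))"
    by (subst sum.reindex) (auto simp: pmf_edge_dist_Some[OF assms] intro!: sum.cong)
  finally show ?thesis by (simp add: sum_distrib_left sum_distrib_right mult.commute)
qed

lemma finite_edge_pairs: "finite (edge_pairs n)"
  by (rule finite_subset[of _ "{1..n} \<times> {1..n}"]) (auto simp: edge_pairs_def)

lemma prob_Gnp_col_le_prod_expectation:
  fixes \<phi> :: "nat \<times> nat \<Rightarrow> nat option \<Rightarrow> real"
  assumes "0 \<le> p" "p \<le> 1" "r \<ge> 1"
    and \<phi>: "\<And>e c. 0 \<le> \<phi> e c" "\<And>e c. \<phi> e c \<le> 1"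
    and a: "a > 0" and A: "\<And>G. G \<in> A \<Longrightarrow> a \<le> (\<Prod>e\<in>edge_pairs n. \<phi> e (G e))"
  shows "measure_pmf.prob (Gnp_col n p r) A \<le>
           (\<Prod>e\<in>edge_pairs n. measure_pmf.expectation (edge_dist p r) (\<phi> e)) / a"
proof -
  let ?M = "measure_pmf (Gnp_col n p r)"
  let ?F = "\<lambda>G. \<Prod>e\<in>edge_pairs n. \<phi> e (G e)"
  have int: "integrable ?M ?F"
    by (rule measure_pmf.integrable_const_bound[where B=1])
       (auto intro!: prod_le_1 prod_nonneg simp: \<phi> abs_prod)
  have "measure_pmf.prob (Gnp_col n p r) A \<le> measure ?M {G\<in>space ?M. ?F G \<ge> a}"
    by (rule measure_pmf.finite_measure_mono) (auto dest: A)
  also have "\<dots> \<le> (\<integral>G. ?F G \<partial>?M) / a"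
    by (rule integral_Markov_inequality_measure[OF int, where A=UNIV])
       (auto intro!: prod_nonneg simp: \<phi> a)
  also have "(\<integral>G. ?F G \<partial>?M) = (\<Prod>e\<in>edge_pairs n. measure_pmf.expectation (edge_dist p r) (\<phi> e))"
    unfolding Gnp_col_def
    by (rule expectation_prod_Pi_pmf)
       (auto simp: finite_edge_pairs \<phi> intro!: measure_pmf.integrable_const_bound[where B=1])
  finally show ?thesis .
qed

lemma prod_if_eq_power:
  fixes x :: real
  assumes "finite A"
  shows "(\<Prod>e\<in>A. if P e then x else 1) = x ^ card {e\<in>A. P e}"
proof -
  have "(\<Prod>e\<in>A. if P e then x else 1) = (\<Prod>e\<in>{e\<in>A. P e}. x)"
    by (rule prod.mono_neutral_cong_right) (use assms in auto)
  thus ?thesis by simp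
qed

lemma sum_if_eq_one:
  fixes x :: real
  assumes "j \<in> {1..r}"
  shows "(\<Sum>c\<in>{1..r}. if c = j then x else 1) = real r - 1 + x"
proof -
  have "(\<Sum>c\<in>{1..r}. if c = j then x else 1) = (\<Sum>c\<in>{1..r}. 1 - (if c = j then 1 - x else 0))"
    by (rule sum.cong) auto
  also have "\<dots> = real r - (1 - x)"
    using assms by (simp add: sum_subtractf)
  finally show ?thesis by simp
qed

text \<open>The exponential-moment (Chernoff) bound: the weight \<open>x\<close> is paid once for every pair of
  \<open>C\<close> carrying its prescribed colour, so each such pair contributes the factor
  \<open>1 - p(1 - x)/r \<le> exp (- p(1 - x)/r)\<close> to the expectation.\<close>

lemma prob_present_and_few_hits_le:
  fixes x m p :: real and c :: "nat \<times> nat \<Rightarrow> nat"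
  assumes p: "0 \<le> p" "p \<le> 1" and r: "r \<ge> 1" and x: "0 < x" "x \<le> 1"
    and F: "F \<subseteq> edge_pairs n" and C: "C \<subseteq> edge_pairs n" and FC: "F \<inter> C = {}"
    and c: "\<And>e. e \<in> C \<Longrightarrow> c e \<in> {1..r}"
  shows "measure_pmf.prob (Gnp_col n p r)
           {G. (\<forall>e\<in>F. G e \<noteq> None) \<and> real (card {e\<in>C. G e = Some (c e)}) \<le> m}
         \<le> p ^ card F * exp (- (p / r) * (1 - x) * card C) / x powr m"
proof -
  define \<phi> :: "nat \<times> nat \<Rightarrow> nat option \<Rightarrow> real" where
    "\<phi> e v = (if e \<in> F then (if v = None then 0 else 1) else if e \<in> C \<and> v = Some (c e) then x else 1)"
    for e v
  define y where "y = 1 - p / r * (1 - x)"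
  have fin: "finite (edge_pairs n)" by (rule finite_edge_pairs)
  have y: "0 \<le> y" "y \<le> exp (- (p / r) * (1 - x))"
  proof -
    have "p / r * (1 - x) \<le> 1 * 1"
      using p x r by (intro mult_mono) (auto simp: field_simps)
    thus "0 \<le> y" by (simp add: y_def)
    show "y \<le> exp (- (p / r) * (1 - x))"
      using exp_ge_add_one_self[of "- (p / r) * (1 - x)"] by (simp add: y_def)
  qed
  have expect: "measure_pmf.expectation (edge_dist p r) (\<phi> e) =
      (if e \<in> F then p else if e \<in> C then y else 1)" for e
  proof -
    have "(\<Sum>v\<in>{1..r}. \<phi> e (Some v)) =
        (if e \<in> F then real r else if e \<in> C then real r - 1 + x else real r)"
      using sum_if_eq_one[of "c e" r x] c by (auto simp: \<phi>_def)
    moreover have "(1 - p) * 1 + p / r * (real r - 1 + x) = y"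
      using r by (simp add: y_def field_simps)
    ultimately show ?thesis
      using r by (auto simp: expectation_edge_dist[OF p r] \<phi>_def field_simps)
  qed
  have "measure_pmf.prob (Gnp_col n p r)
           {G. (\<forall>e\<in>F. G e \<noteq> None) \<and> real (card {e\<in>C. G e = Some (c e)}) \<le> m}
        \<le> (\<Prod>e\<in>edge_pairs n. measure_pmf.expectation (edge_dist p r) (\<phi> e)) / x powr m"
  proof (rule prob_Gnp_col_le_prod_expectation[OF p r])
    show "0 \<le> \<phi> e v" "\<phi> e v \<le> 1" for e v using x by (auto simp: \<phi>_def)
    show "x powr m > 0" using x by simp
    fix G assume G: "G \<in> {G. (\<forall>e\<in>F. G e \<noteq> None) \<and> real (card {e\<in>C. G e = Some (c e)}) \<le> m}"
    have "(\<Prod>e\<in>edge_pairs n. \<phi> e (G e)) = (\<Prod>e\<in>edge_pairs n. if e \<in> C \<and> G e = Some (c e) then x else 1)"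
      using G FC by (intro prod.cong) (auto simp: \<phi>_def)
    also have "\<dots> = x ^ card {e\<in>C. G e = Some (c e)}"
    proof -
      have "{e \<in> edge_pairs n. e \<in> C \<and> G e = Some (c e)} = {e\<in>C. G e = Some (c e)}"
        using C by auto
      thus ?thesis by (simp add: prod_if_eq_power[OF fin])
    qed
    also have "\<dots> = x powr real (card {e\<in>C. G e = Some (c e)})"
      using x by (simp add: powr_realpow)
    also have "\<dots> \<ge> x powr m"
      using G x by (intro powr_mono') auto
    finally show "x powr m \<le> (\<Prod>e\<in>edge_pairs n. \<phi> e (G e))" .
  qed
  also have "(\<Prod>e\<in>edge_pairs n. measure_pmf.expectation (edge_dist p r) (\<phi> e)) = p ^ card F * y ^ card C"
  proof -
    have "(\<Prod>e\<in>edge_pairs n. if e \<in> F then p else if e \<in> C then y else 1)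
        = (\<Prod>e\<in>edge_pairs n. if e \<in> F then p else 1) * (\<Prod>e\<in>edge_pairs n. if e \<in> C then y else 1)"
      using FC by (subst prod.distrib[symmetric]) (auto intro!: prod.cong)
    thus ?thesis
      using F C by (simp add: expect prod_if_eq_power[OF fin] Int_absorb1 flip: Int_def)
  qed
  also have "y ^ card C \<le> exp (- (p / r) * (1 - x)) ^ card C"
    by (intro power_mono y)
  also have "\<dots> = exp (- (p / r) * (1 - x) * card C)"
    by (simp add: exp_of_nat_mult[symmetric] mult.commute)
  finally show ?thesis using p x by (simp add: divide_right_mono mult_left_mono)
qed

section \<open>Pairs, parts and degrees\<close>

definition pairs_in :: "nat set \<Rightarrow> (nat \<times> nat) set" where
  "pairs_in S = {(a, b). a \<in> S \<and> b \<in> S \<and> a < b}"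

lemma finite_pairs_in: "finite S \<Longrightarrow> finite (pairs_in S)"
  by (rule finite_subset[of _ "S \<times> S"]) (auto simp: pairs_in_def)

lemma card_pairs_in_le: "finite S \<Longrightarrow> card (pairs_in S) \<le> card S * card S"
  using card_mono[of "S \<times> S" "pairs_in S"] by (auto simp: pairs_in_def card_cartesian_product)

lemma pairs_in_subset_edge_pairs: "S \<subseteq> {1..n} \<Longrightarrow> pairs_in S \<subseteq> edge_pairs n"
  by (auto simp: pairs_in_def edge_pairs_def)

definition vpair :: "nat \<Rightarrow> nat \<Rightarrow> nat \<times> nat" where
  "vpair v w = (min v w, max v w)"

lemma col_eq_vpair: "v \<noteq> w \<Longrightarrow> col G v w = G (vpair v w)"
  by (simp add: col_def vpair_def)

lemma inj_vpair: "inj (vpair v)"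
proof (rule injI)
  fix w w' assume "vpair v w = vpair v w'"
  thus "w = w'" by (auto simp: vpair_def min_def max_def split: if_splits)
qed

lemma vpair_eq_vpair_across:
  assumes "v \<in> S" "v' \<in> S" "w \<notin> S" "w' \<notin> S" "vpair v w = vpair v' w'"
  shows "v = v'"
  using assms by (auto simp: vpair_def min_def max_def split: if_splits)

lemma vpair_in_edge_pairs: "v \<in> {1..n} \<Longrightarrow> w \<in> {1..n} \<Longrightarrow> v \<noteq> w \<Longrightarrow> vpair v w \<in> edge_pairs n"
  by (auto simp: vpair_def edge_pairs_def min_def max_def)

lemma vpair_notin_pairs_in: "w \<notin> S \<Longrightarrow> vpair v w \<notin> pairs_in S"
  by (auto simp: vpair_def pairs_in_def min_def max_def split: if_splits)

lemma part_eq: "n = r * k \<Longrightarrow> r > 0 \<Longrightarrow> part n r j = {(j - 1) * k <.. j * k}"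
  by (auto simp: part_def)

lemma finite_part: "n = r * k \<Longrightarrow> r > 0 \<Longrightarrow> finite (part n r j)"
  by (simp add: part_eq)

lemma card_part: "n = r * k \<Longrightarrow> r > 0 \<Longrightarrow> j \<ge> 1 \<Longrightarrow> card (part n r j) = k"
  by (simp add: part_eq diff_mult_distrib)

lemma part_subset: "n = r * k \<Longrightarrow> r > 0 \<Longrightarrow> j \<in> {1..r} \<Longrightarrow> part n r j \<subseteq> {1..n}"
  by (auto simp: part_eq intro: order.trans[OF _ mult_le_mono1])

text \<open>The pairs counted for distinct \<open>v \<in> S\<close> are distinct and avoid \<open>pairs_in S\<close>, which makes
  these degrees independent of each other and of the edges inside \<open>S\<close>.\<close>

definition deg_outside :: "cgraph \<Rightarrow> nat \<Rightarrow> nat \<Rightarrow> nat \<Rightarrow> nat \<Rightarrow> nat set \<Rightarrow> nat" where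
  "deg_outside G n r j v S = card {w \<in> part n r j - S. col G v w = Some j}"

lemma small_set_deg_outside_le:
  assumes "n = r * k" "r > 0" and v: "v \<in> small_set \<epsilon> G n r"
    and t: "eta \<epsilon> r * ln (real n) \<le> t"
  shows "\<exists>j\<in>{1..r}. real (deg_outside G n r j v S) \<le> t"
proof -
  have in_range: "csucc r i \<in> {1..r}" "cpred r i \<in> {1..r}" if "i \<in> {1..r}" for i
    using that by (auto simp: csucc_def cpred_def)
  have "\<exists>j\<in>{1..r}. real (card {w \<in> part n r j. col G v w = Some j}) < eta \<epsilon> r * ln (real n)"
    using v in_range by (auto simp: small_set_def large_def dplus_def dminus_def not_le)
  then obtain j where j: "j \<in> {1..r}"
      "real (card {w \<in> part n r j. col G v w = Some j}) < eta \<epsilon> r * ln (real n)" ..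
  have "deg_outside G n r j v S \<le> card {w \<in> part n r j. col G v w = Some j}"
    unfolding deg_outside_def using assms by (intro card_mono) (auto simp: finite_part)
  thus ?thesis using j t by (intro bexI[of _ j]) auto
qed

lemma card_colored_pairs_from:
  assumes "v \<in> S"
  shows "card {e \<in> vpair v ` (part n r j - S). G e = Some j} = deg_outside G n r j v S"
proof -
  have "col G v w = G (vpair v w)" if "w \<notin> S" for w
    using that assms col_eq_vpair by metis
  hence "{e \<in> vpair v ` (part n r j - S). G e = Some j} = vpair v ` {w \<in> part n r j - S. col G v w = Some j}"
    by auto
  thus ?thesis by (simp add: deg_outside_def card_image inj_on_subset[OF inj_vpair])
qed

definition inner_end :: "nat set \<Rightarrow> nat \<times> nat \<Rightarrow> nat" where
  "inner_end S e = (if fst e \<in> S then fst e else snd e)"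

lemma inner_end_vpair: "v \<in> S \<Longrightarrow> w \<notin> S \<Longrightarrow> inner_end S (vpair v w) = v"
  by (auto simp: inner_end_def vpair_def min_def max_def)

definition pairs_out :: "nat \<Rightarrow> nat \<Rightarrow> nat set \<Rightarrow> (nat \<Rightarrow> nat) \<Rightarrow> nat set \<Rightarrow> (nat \<times> nat) set" where
  "pairs_out n r S jf K = (\<Union>v\<in>K. vpair v ` (part n r (jf v) - S))"

lemma disjoint_pairs_from:
  assumes "v \<in> S" "v' \<in> S" "v \<noteq> v'"
  shows "vpair v ` (A - S) \<inter> vpair v' ` (A' - S) = {}"
proof (rule ccontr)
  assume "vpair v ` (A - S) \<inter> vpair v' ` (A' - S) \<noteq> {}"
  then obtain w w' where "w \<notin> S" "w' \<notin> S" "vpair v w = vpair v' w'" by blast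
  thus False using vpair_eq_vpair_across[of v S v' w w'] assms by auto
qed

context
  fixes n r k :: nat and S K :: "nat set" and jf :: "nat \<Rightarrow> nat"
  assumes nk: "n = r * k" and r: "r > 0" and S: "S \<subseteq> {1..n}" and K: "K \<subseteq> S"
    and jf: "\<And>v. v \<in> K \<Longrightarrow> jf v \<in> {1..r}"
begin

lemma disjoint_pairs_out_parts:
  "\<forall>v\<in>K. \<forall>v'\<in>K. v \<noteq> v' \<longrightarrow> vpair v ` (part n r (jf v) - S) \<inter> vpair v' ` (part n r (jf v') - S) = {}"
proof (intro ballI impI)
  fix v v' assume "v \<in> K" "v' \<in> K" "v \<noteq> v'"
  thus "vpair v ` (part n r (jf v) - S) \<inter> vpair v' ` (part n r (jf v') - S) = {}"
    using K by (intro disjoint_pairs_from) auto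
qed

lemma pairs_out_subset_edge_pairs: "pairs_out n r S jf K \<subseteq> edge_pairs n"
proof
  fix e assume "e \<in> pairs_out n r S jf K"
  then obtain v w where "v \<in> K" "w \<in> part n r (jf v)" "w \<notin> S" "e = vpair v w"
    by (auto simp: pairs_out_def)
  moreover have "v \<in> {1..n}" "v \<noteq> w" using \<open>v \<in> K\<close> \<open>w \<notin> S\<close> K S by auto
  moreover have "w \<in> {1..n}" using part_subset[OF nk r jf] calculation by blast
  ultimately show "e \<in> edge_pairs n" by (simp add: vpair_in_edge_pairs)
qed

lemma inner_end_pairs_out: "e \<in> pairs_out n r S jf K \<Longrightarrow> jf (inner_end S e) \<in> {1..r}"
  using K jf by (auto simp: pairs_out_def inner_end_vpair)

lemma card_pairs_out_ge: "real (card K) * (real k - card S) \<le> real (card (pairs_out n r S jf K))"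
proof -
  have finS: "finite S" using S finite_subset by blast
  have "real k - card S \<le> card (vpair v ` (part n r (jf v) - S))" if v: "v \<in> K" for v
  proof -
    have "card (part n r (jf v)) \<le> card (part n r (jf v) - S) + card S"
      using diff_card_le_card_Diff[OF finS, of "part n r (jf v)"] by arith
    thus ?thesis using card_part[OF nk r] jf[OF v] by (simp add: card_image inj_on_subset[OF inj_vpair])
  qed
  hence "real (card K) * (real k - card S) \<le> (\<Sum>v\<in>K. real (card (vpair v ` (part n r (jf v) - S))))"
    using sum_mono[of K "\<lambda>_. real k - card S"] by simp
  also have "\<dots> = real (card (pairs_out n r S jf K))"
  proof -
    have "card (pairs_out n r S jf K) = (\<Sum>v\<in>K. card (vpair v ` (part n r (jf v) - S)))"
      unfolding pairs_out_def using finite_subset[OF K finS] disjoint_pairs_out_parts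
      by (intro card_UN_disjoint) (auto simp: finite_part[OF nk r])
    thus ?thesis by simp
  qed
  finally show ?thesis .
qed

lemma card_colored_pairs_out:
  "card {e \<in> pairs_out n r S jf K. G e = Some (jf (inner_end S e))} = (\<Sum>v\<in>K. deg_outside G n r (jf v) v S)"
proof -
  have finK: "finite K" using finite_subset[OF K] finite_subset[OF S] by blast
  have "{e \<in> pairs_out n r S jf K. G e = Some (jf (inner_end S e))}
      = (\<Union>v\<in>K. {e \<in> vpair v ` (part n r (jf v) - S). G e = Some (jf v)})"
  proof -
    have "inner_end S (vpair v w) = v" if "v \<in> K" "w \<notin> S" for v w
      using that K inner_end_vpair by blast
    thus ?thesis by (auto simp: pairs_out_def)
  qed
  also have "card \<dots> = (\<Sum>v\<in>K. card {e \<in> vpair v ` (part n r (jf v) - S). G e = Some (jf v)})"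
    using disjoint_pairs_out_parts by (intro card_UN_disjoint[OF finK]) (auto simp: finite_part[OF nk r])
  also have "\<dots> = (\<Sum>v\<in>K. deg_outside G n r (jf v) v S)"
    using K by (intro sum.cong) (auto simp: card_colored_pairs_from)
  finally show ?thesis .
qed

end

lemma prob_present_and_low_degrees_le:
  fixes x t p :: real
  assumes nk: "n = r * k" and r: "r \<ge> 1" and p: "0 \<le> p" "p \<le> 1" and x: "0 < x" "x \<le> 1"
    and S: "S \<subseteq> {1..n}" and K: "K \<subseteq> S" and F: "F \<subseteq> pairs_in S"
    and jf: "\<And>v. v \<in> K \<Longrightarrow> jf v \<in> {1..r}"
  shows "measure_pmf.prob (Gnp_col n p r)
           {G. (\<forall>e\<in>F. G e \<noteq> None) \<and> (\<forall>v\<in>K. real (deg_outside G n r (jf v) v S) \<le> t)}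
         \<le> p ^ card F * exp (- (p / r) * (1 - x) * card K * (real k - card S)) / x powr (t * card K)"
proof -
  let ?C = "pairs_out n r S jf K"
  have r0: "r > 0" using r by simp
  have "measure_pmf.prob (Gnp_col n p r)
           {G. (\<forall>e\<in>F. G e \<noteq> None) \<and> (\<forall>v\<in>K. real (deg_outside G n r (jf v) v S) \<le> t)}
        \<le> measure_pmf.prob (Gnp_col n p r)
           {G. (\<forall>e\<in>F. G e \<noteq> None) \<and> real (card {e\<in>?C. G e = Some (jf (inner_end S e))}) \<le> t * card K}"
  proof (rule measure_pmf.finite_measure_mono, safe)
    fix G assume "\<forall>v\<in>K. real (deg_outside G n r (jf v) v S) \<le> t"
    hence "(\<Sum>v\<in>K. real (deg_outside G n r (jf v) v S)) \<le> (\<Sum>v\<in>K. t)" by (intro sum_mono) auto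
    moreover have "card {e\<in>?C. G e = Some (jf (inner_end S e))} = (\<Sum>v\<in>K. deg_outside G n r (jf v) v S)"
      by (rule card_colored_pairs_out[OF nk r0 S K jf])
    hence "real (card {e\<in>?C. G e = Some (jf (inner_end S e))}) = (\<Sum>v\<in>K. real (deg_outside G n r (jf v) v S))"
      by simp
    ultimately show "real (card {e\<in>?C. G e = Some (jf (inner_end S e))}) \<le> t * card K"
      by (simp add: mult.commute)
  qed simp
  also have "\<dots> \<le> p ^ card F * exp (- (p / r) * (1 - x) * card ?C) / x powr (t * card K)"
  proof (rule prob_present_and_few_hits_le[OF p r x])
    show "F \<subseteq> edge_pairs n" using F pairs_in_subset_edge_pairs[OF S] by blast
    show "F \<inter> ?C = {}" using F vpair_notin_pairs_in by (auto simp: pairs_out_def)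
  qed (use pairs_out_subset_edge_pairs[of n r k S K jf, OF nk r0 S K jf] inner_end_pairs_out[of n r k S K jf, OF nk r0 S K jf] in auto)
  also have "\<dots> \<le> p ^ card F * exp (- (p / r) * (1 - x) * card K * (real k - card S)) / x powr (t * card K)"
  proof -
    have "0 \<le> p / r * (1 - x)" using p x by simp
    hence "p / r * (1 - x) * (card K * (real k - card S)) \<le> p / r * (1 - x) * card ?C"
      by (intro mult_left_mono card_pairs_out_ge[of n r k S K jf, OF nk r0 S K jf])
    thus ?thesis using p x by (intro divide_right_mono mult_left_mono) (auto simp: mult.assoc)
  qed
  finally show ?thesis .
qed

section \<open>First-moment bounds\<close>

lemma prob_UN_le_card_mult:
  assumes "finite I" "card I \<le> N" "\<And>i. i \<in> I \<Longrightarrow> measure_pmf.prob M (E i) \<le> b" "0 \<le> b"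
  shows "measure_pmf.prob M (\<Union>i\<in>I. E i) \<le> N * b"
proof -
  have "measure_pmf.prob M (\<Union>i\<in>I. E i) \<le> (\<Sum>i\<in>I. measure_pmf.prob M (E i))"
    by (rule measure_pmf.finite_measure_subadditive_finite) (use assms in auto)
  also have "\<dots> \<le> card I * b" using sum_mono[of I _ "\<lambda>_. b"] assms(3) by simp
  also have "\<dots> \<le> N * b" using assms(2,4) by (intro mult_right_mono) auto
  finally show ?thesis .
qed

lemma prob_exists_subset_le:
  fixes b :: "nat \<Rightarrow> real"
  assumes A: "A \<subseteq> (\<Union>S\<in>{S. S \<subseteq> {1..n} \<and> card S \<in> {1..N}}. E S)"
    and E: "\<And>S. S \<subseteq> {1..n} \<Longrightarrow> card S \<in> {1..N} \<Longrightarrow> measure_pmf.prob M (E S) \<le> b (card S)"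
    and b: "\<And>s. 0 \<le> b s"
  shows "measure_pmf.prob M A \<le> (\<Sum>s\<in>{1..N}. real (n choose s) * b s)"
proof -
  let ?SS = "\<lambda>s. {S. S \<subseteq> {1..n} \<and> card S = s}"
  have "measure_pmf.prob M A \<le> measure_pmf.prob M (\<Union>s\<in>{1..N}. \<Union>S\<in>?SS s. E S)"
    by (rule measure_pmf.finite_measure_mono) (use A in blast, simp)
  also have "\<dots> \<le> (\<Sum>s\<in>{1..N}. measure_pmf.prob M (\<Union>S\<in>?SS s. E S))"
    by (rule measure_pmf.finite_measure_subadditive_finite) auto
  also have "\<dots> \<le> (\<Sum>s\<in>{1..N}. real (n choose s) * b s)"
  proof (rule sum_mono)
    fix s assume "s \<in> {1..N}"
    moreover have "finite (?SS s)" by (rule finite_subset[of _ "Pow {1..n}"]) auto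
    moreover have "card (?SS s) = n choose s" using n_subsets[of "{1..n}" s] by simp
    ultimately show "measure_pmf.prob M (\<Union>S\<in>?SS s. E S) \<le> real (n choose s) * b s"
      using E b by (intro prob_UN_le_card_mult) auto
  qed
  finally show ?thesis .
qed

lemma prob_exists_pairs_in_le:
  assumes "finite S" and E: "\<And>F. F \<subseteq> pairs_in S \<Longrightarrow> card F = m \<Longrightarrow> measure_pmf.prob M (E F) \<le> b"
    and "0 \<le> b"
  shows "measure_pmf.prob M (\<Union>F\<in>{F. F \<subseteq> pairs_in S \<and> card F = m}. E F)
           \<le> real ((card S * card S) choose m) * b"
proof (rule prob_UN_le_card_mult)
  show "finite {F. F \<subseteq> pairs_in S \<and> card F = m}"
    by (rule finite_subset[of _ "Pow (pairs_in S)"]) (auto simp: finite_pairs_in assms(1))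
  have "card {F. F \<subseteq> pairs_in S \<and> card F = m} = card (pairs_in S) choose m"
    using n_subsets[OF finite_pairs_in[OF assms(1)]] by simp
  also have "\<dots> \<le> (card S * card S) choose m"
    by (intro binomial_right_mono card_pairs_in_le assms(1))
  finally show "card {F. F \<subseteq> pairs_in S \<and> card F = m} \<le> (card S * card S) choose m" .
qed (use assms in auto)

lemma prob_all_present_le:
  assumes "0 \<le> p" "p \<le> 1" "r \<ge> 1" "F \<subseteq> edge_pairs n"
  shows "measure_pmf.prob (Gnp_col n p r) {G. \<forall>e\<in>F. G e \<noteq> None} \<le> p ^ card F"
  using prob_present_and_few_hits_le[OF assms(1-3), where x=1 and m=0 and C="{}" and F=F] assms(4)
  by simp

lemma prob_dense_subset_le:
  assumes "0 \<le> p" "p \<le> 1" "r \<ge> 1"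
  shows "measure_pmf.prob (Gnp_col n p r)
     {G. \<exists>S \<subseteq> {1..n}. real (card S) \<le> M \<and> spanned_edges G S > 100 * card S}
     \<le> (\<Sum>s\<in>{1..nat \<lfloor>M\<rfloor>}. real (n choose s) * (real ((s * s) choose (100 * s + 1)) * p ^ (100 * s + 1)))"
proof (rule prob_exists_subset_le)
  let ?E = "\<lambda>S. \<Union>F\<in>{F. F \<subseteq> pairs_in S \<and> card F = 100 * card S + 1}. {G. \<forall>e\<in>F. G e \<noteq> None}"
  show "{G. \<exists>S \<subseteq> {1..n}. real (card S) \<le> M \<and> spanned_edges G S > 100 * card S}
        \<subseteq> (\<Union>S\<in>{S. S \<subseteq> {1..n} \<and> card S \<in> {1..nat \<lfloor>M\<rfloor>}}. ?E S)"
  proof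
    fix G assume "G \<in> {G. \<exists>S \<subseteq> {1..n}. real (card S) \<le> M \<and> spanned_edges G S > 100 * card S}"
    then obtain S where S: "S \<subseteq> {1..n}" "real (card S) \<le> M" "spanned_edges G S > 100 * card S"
      by auto
    define P where "P = {e \<in> pairs_in S. G e \<noteq> None}"
    have "P = {(i, j). i \<in> S \<and> j \<in> S \<and> i < j \<and> G (i, j) \<noteq> None}"
      by (auto simp: P_def pairs_in_def)
    hence "card P > 100 * card S" using S by (simp add: spanned_edges_def)
    then obtain F where F: "F \<subseteq> P" "card F = 100 * card S + 1"
      by (metis Suc_eq_plus1 Suc_leI obtain_subset_with_card_n)
    have "S \<noteq> {}" using \<open>card P > 100 * card S\<close> by (auto simp: P_def pairs_in_def)
    hence "S \<in> {S. S \<subseteq> {1..n} \<and> card S \<in> {1..nat \<lfloor>M\<rfloor>}}"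
      using S finite_subset[OF S(1)] by (auto simp: Suc_le_eq card_gt_0_iff le_nat_floor)
    moreover have "G \<in> ?E S" using F by (auto simp: P_def)
    ultimately show "G \<in> (\<Union>S\<in>{S. S \<subseteq> {1..n} \<and> card S \<in> {1..nat \<lfloor>M\<rfloor>}}. ?E S)" by blast
  qed
  fix S assume S: "S \<subseteq> {1..n}"
  have "measure_pmf.prob (Gnp_col n p r) {G. \<forall>e\<in>F. G e \<noteq> None} \<le> p ^ (100 * card S + 1)"
    if "F \<subseteq> pairs_in S" "card F = 100 * card S + 1" for F
    using prob_all_present_le[OF assms, of F n] that pairs_in_subset_edge_pairs[OF S] by auto
  then show "measure_pmf.prob (Gnp_col n p r) (?E S)
      \<le> real ((card S * card S) choose (100 * card S + 1)) * p ^ (100 * card S + 1)"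
    using finite_subset[OF S] assms by (intro prob_exists_pairs_in_le) auto
qed (use assms in auto)

lemma rtranclp_leaves_set:
  assumes "R\<^sup>*\<^sup>* a b" "a \<in> T" "b \<notin> T"
  shows "\<exists>x y. R x y \<and> x \<in> T \<and> y \<notin> T"
  using assms by (induction rule: rtranclp_induct) auto

text \<open>Grow a subset of \<open>S\<close> one crossing edge at a time.\<close>

lemma induced_connected_card_edges:
  assumes finS: "finite S" and conn: "induced_connected G S" and ne: "S \<noteq> {}"
  shows "card S - 1 \<le> card {e \<in> pairs_in S. G e \<noteq> None}"
proof -
  have "\<exists>T \<subseteq> S. card T = Suc m \<and> m \<le> card {e \<in> pairs_in T. G e \<noteq> None}"
    if "Suc m \<le> card S" for m
    using that
  proof (induction m)
    case 0
    then obtain a where "a \<in> S" using ne by auto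
    thus ?case by (intro exI[of _ "{a}"]) auto
  next
    case (Suc m)
    then obtain T where T: "T \<subseteq> S" "card T = Suc m" "m \<le> card {e \<in> pairs_in T. G e \<noteq> None}"
      by auto
    have finT: "finite T" using T finS finite_subset by blast
    have "T \<noteq> S" using T Suc.prems by auto
    then obtain b0 where b0: "b0 \<in> S" "b0 \<notin> T" using T by auto
    obtain a0 where a0: "a0 \<in> T" using T by (metis card_gt_0_iff ex_in_conv zero_less_Suc)
    have "(\<lambda>x y. x \<in> S \<and> y \<in> S \<and> adj G x y)\<^sup>*\<^sup>* a0 b0"
      using conn a0 b0 T by (auto simp: induced_connected_def)
    then obtain a b where ab: "a \<in> S" "b \<in> S" "adj G a b" "a \<in> T" "b \<notin> T"
      using rtranclp_leaves_set[of _ a0 b0 T] a0 b0 by blast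
    have "a \<noteq> b" "G (vpair a b) \<noteq> None"
      using ab by (auto simp: adj_def col_def vpair_def split: if_splits)
    hence new: "vpair a b \<notin> pairs_in T" "G (vpair a b) \<noteq> None" "vpair a b \<in> pairs_in (insert b T)"
      using ab by (auto simp: vpair_def pairs_in_def min_def max_def)
    have "Suc m \<le> card (insert (vpair a b) {e \<in> pairs_in T. G e \<noteq> None})"
      using T(3) new finite_pairs_in[OF finT] by (subst card_insert_disjoint) auto
    also have "\<dots> \<le> card {e \<in> pairs_in (insert b T). G e \<noteq> None}"
    proof (rule card_mono)
      show "finite {e \<in> pairs_in (insert b T). G e \<noteq> None}" using finT by (simp add: finite_pairs_in)
      show "insert (vpair a b) {e \<in> pairs_in T. G e \<noteq> None} \<subseteq> {e \<in> pairs_in (insert b T). G e \<noteq> None}"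
        using new by (auto simp: pairs_in_def)
    qed
    finally show ?case using T ab finT by (intro exI[of _ "insert b T"]) auto
  qed
  from this[of "card S - 1"] obtain T where "T \<subseteq> S" "card T = card S"
      "card S - 1 \<le> card {e \<in> pairs_in T. G e \<noteq> None}"
    using ne finS by (auto simp: card_gt_0_iff Suc_le_eq)
  thus ?thesis using finS by (metis card_subset_eq)
qed

lemma small_cluster_witness:
  assumes nk: "n = r * k" "r > 0" and t: "eta \<epsilon> r * ln (real n) \<le> t"
    and S: "finite S" "induced_connected G S" "S \<noteq> {}" and small: "k0 \<le> card (S \<inter> small_set \<epsilon> G n r)"
  obtains F K jf where "F \<subseteq> pairs_in S" "card F = card S - 1" "\<forall>e\<in>F. G e \<noteq> None"
    and "K \<subseteq> S" "card K = k0" and "jf \<in> K \<rightarrow>\<^sub>E {1..r}"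
    and "\<forall>v\<in>K. real (deg_outside G n r (jf v) v S) \<le> t"
proof -
  obtain F where F: "F \<subseteq> {e \<in> pairs_in S. G e \<noteq> None}" "card F = card S - 1"
    using obtain_subset_with_card_n[OF induced_connected_card_edges[OF S]] by blast
  obtain K where K: "K \<subseteq> S \<inter> small_set \<epsilon> G n r" "card K = k0"
    using obtain_subset_with_card_n[OF small] by blast
  have "\<forall>v\<in>K. \<exists>j\<in>{1..r}. real (deg_outside G n r j v S) \<le> t"
    using K small_set_deg_outside_le[OF nk _ t] by blast
  then obtain jf where jf: "\<forall>v\<in>K. jf v \<in> {1..r} \<and> real (deg_outside G n r (jf v) v S) \<le> t"
    by metis
  show ?thesis
    by (rule that[of F K "restrict jf K"]) (use F K jf in auto)
qed

lemma prob_connected_with_small_le: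
  fixes x t p :: real
  assumes nk: "n = r * k" and r: "r \<ge> 1" and p: "0 \<le> p" "p \<le> 1" and x: "0 < x" "x \<le> 1"
    and t: "eta \<epsilon> r * ln (real n) \<le> t" and k0: "k0 \<ge> 1"
  shows "measure_pmf.prob (Gnp_col n p r)
     {G. \<exists>S \<subseteq> {1..n}. real (card S) \<le> M \<and> induced_connected G S \<and> k0 \<le> card (S \<inter> small_set \<epsilon> G n r)}
     \<le> (\<Sum>s\<in>{1..nat \<lfloor>M\<rfloor>}. real (n choose s) * (real ((s * s) choose (s - 1)) * (real (s choose k0) *
          (real r ^ k0 * (p ^ (s - 1) * exp (- (p / r) * (1 - x) * k0 * (real k - s)) / x powr (t * k0))))))"
proof (rule prob_exists_subset_le)
  have r0: "r > 0" using r by simp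
  define Ev where "Ev S F K jf = {G. (\<forall>e\<in>F. G e \<noteq> None) \<and> (\<forall>v\<in>K. real (deg_outside G n r (jf v) v S) \<le> t)}"
    for S F K jf
  define E where "E S = (\<Union>F\<in>{F. F \<subseteq> pairs_in S \<and> card F = card S - 1}.
      \<Union>K\<in>{K. K \<subseteq> S \<and> card K = k0}. \<Union>jf\<in>K \<rightarrow>\<^sub>E {1..r}. Ev S F K jf)" for S
  show "{G. \<exists>S \<subseteq> {1..n}. real (card S) \<le> M \<and> induced_connected G S \<and> k0 \<le> card (S \<inter> small_set \<epsilon> G n r)}
        \<subseteq> (\<Union>S\<in>{S. S \<subseteq> {1..n} \<and> card S \<in> {1..nat \<lfloor>M\<rfloor>}}. E S)"
  proof
    fix G assume "G \<in> {G. \<exists>S \<subseteq> {1..n}. real (card S) \<le> M \<and> induced_connected G S \<and> k0 \<le> card (S \<inter> small_set \<epsilon> G n r)}"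
    then obtain S where S: "S \<subseteq> {1..n}" "real (card S) \<le> M" "induced_connected G S"
        "k0 \<le> card (S \<inter> small_set \<epsilon> G n r)"
      by auto
    have finS: "finite S" using S finite_subset by blast
    have ne: "S \<noteq> {}" using S(4) k0 by auto
    obtain F K jf where F: "F \<subseteq> pairs_in S" "card F = card S - 1" "\<forall>e\<in>F. G e \<noteq> None"
      and K: "K \<subseteq> S" "card K = k0" and jf: "jf \<in> K \<rightarrow>\<^sub>E {1..r}"
      and low: "\<forall>v\<in>K. real (deg_outside G n r (jf v) v S) \<le> t"
      using small_cluster_witness[OF nk r0 t finS S(3) ne S(4)] .
    have S_in: "S \<in> {S. S \<subseteq> {1..n} \<and> card S \<in> {1..nat \<lfloor>M\<rfloor>}}"
      using S ne finS by (auto simp: Suc_le_eq card_gt_0_iff le_nat_floor)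
    have "G \<in> (\<Union>jf\<in>K \<rightarrow>\<^sub>E {1..r}. Ev S F K jf)" using jf F(3) low by (auto simp: Ev_def)
    hence "G \<in> E S" unfolding E_def using F K by blast
    thus "G \<in> (\<Union>S\<in>{S. S \<subseteq> {1..n} \<and> card S \<in> {1..nat \<lfloor>M\<rfloor>}}. E S)"
      by (rule UN_I[OF S_in])
  qed
  fix S assume S: "S \<subseteq> {1..n}"
  define B where "B = p ^ (card S - 1) * exp (- (p / r) * (1 - x) * k0 * (real k - card S)) / x powr (t * k0)"
  have B0: "0 \<le> B" using p x by (simp add: B_def)
  have finS: "finite S" using S finite_subset by blast
  have "measure_pmf.prob (Gnp_col n p r) (\<Union>K\<in>{K. K \<subseteq> S \<and> card K = k0}. \<Union>jf\<in>K \<rightarrow>\<^sub>E {1..r}. Ev S F K jf)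
        \<le> real (card S choose k0) * (real r ^ k0 * B)"
    if F: "F \<subseteq> pairs_in S" "card F = card S - 1" for F
  proof (rule prob_UN_le_card_mult)
    show "finite {K. K \<subseteq> S \<and> card K = k0}" using finS by simp
    show "card {K. K \<subseteq> S \<and> card K = k0} \<le> card S choose k0" using n_subsets[OF finS] by simp
    fix K assume K: "K \<in> {K. K \<subseteq> S \<and> card K = k0}"
    hence finK: "finite K" using finS finite_subset by blast
    have "measure_pmf.prob (Gnp_col n p r) (\<Union>jf\<in>K \<rightarrow>\<^sub>E {1..r}. Ev S F K jf) \<le> real (r ^ k0) * B"
    proof (rule prob_UN_le_card_mult)
      show "card (K \<rightarrow>\<^sub>E {1..r}) \<le> r ^ k0" using K finK by (simp add: card_PiE)
      fix jf assume "jf \<in> K \<rightarrow>\<^sub>E {1..r}"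
      hence "\<And>v. v \<in> K \<Longrightarrow> jf v \<in> {1..r}" by blast
      thus "measure_pmf.prob (Gnp_col n p r) (Ev S F K jf) \<le> B"
        using prob_present_and_low_degrees_le[OF nk r p x S _ F(1), of K jf t] K F(2)
        by (simp add: Ev_def B_def)
    qed (use finK B0 in \<open>auto simp: finite_PiE\<close>)
    thus "measure_pmf.prob (Gnp_col n p r) (\<Union>jf\<in>K \<rightarrow>\<^sub>E {1..r}. Ev S F K jf) \<le> real r ^ k0 * B"
      by simp
  qed (use B0 in simp)
  thus "measure_pmf.prob (Gnp_col n p r) (E S)
    \<le> real ((card S * card S) choose (card S - 1)) * (real (card S choose k0) * (real r ^ k0 *
          (p ^ (card S - 1) * exp (- (p / r) * (1 - x) * k0 * (real k - card S)) / x powr (t * k0))))"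
    unfolding E_def B_def[symmetric] using finS B0 by (intro prob_exists_pairs_in_le) auto
qed (use p x in auto)

lemma prob_small_vertex_le:
  fixes x t p :: real
  assumes nk: "n = r * k" and r: "r \<ge> 1" and p: "0 \<le> p" "p \<le> 1" and x: "0 < x" "x \<le> 1"
    and t: "eta \<epsilon> r * ln (real n) \<le> t" and v: "v \<in> {1..n}"
  shows "measure_pmf.prob (Gnp_col n p r) {G. v \<in> small_set \<epsilon> G n r}
     \<le> real r * (exp (- (p / r) * (1 - x) * (real k - 1)) / x powr t)"
proof -
  have "{G. v \<in> small_set \<epsilon> G n r} \<subseteq> (\<Union>j\<in>{1..r}. {G. real (deg_outside G n r j v {v}) \<le> t})"
    using small_set_deg_outside_le[OF nk _ _ t, of _ _ "{v}"] r by auto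
  hence "measure_pmf.prob (Gnp_col n p r) {G. v \<in> small_set \<epsilon> G n r}
      \<le> measure_pmf.prob (Gnp_col n p r) (\<Union>j\<in>{1..r}. {G. real (deg_outside G n r j v {v}) \<le> t})"
    by (rule measure_pmf.finite_measure_mono) simp
  also have "\<dots> \<le> real r * (exp (- (p / r) * (1 - x) * (real k - 1)) / x powr t)"
  proof (rule prob_UN_le_card_mult)
    fix j assume "j \<in> {1..r}"
    thus "measure_pmf.prob (Gnp_col n p r) {G. real (deg_outside G n r j v {v}) \<le> t}
        \<le> exp (- (p / r) * (1 - x) * (real k - 1)) / x powr t"
      using prob_present_and_low_degrees_le[OF nk r p x, of "{v}" "{v}" "{}" "\<lambda>_. j" t] v by simp
  qed simp_all
  finally show ?thesis .
qed

lemma prob_many_small_vertices_le: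
  fixes x t p c :: real
  assumes nk: "n = r * k" and r: "r \<ge> 1" and p: "0 \<le> p" "p \<le> 1" and x: "0 < x" "x \<le> 1"
    and t: "eta \<epsilon> r * ln (real n) \<le> t" and c: "c > 0"
  shows "measure_pmf.prob (Gnp_col n p r) {G. real (card (small_set \<epsilon> G n r)) > c}
     \<le> real n * (real r * (exp (- (p / r) * (1 - x) * (real k - 1)) / x powr t)) / c"
proof -
  let ?M = "measure_pmf (Gnp_col n p r)"
  define I where "I v = {G. v \<in> small_set \<epsilon> G n r}" for v
  define u where "u G = (\<Sum>v\<in>{1..n}. indicator (I v) G :: real)" for G
  have card_small: "real (card (small_set \<epsilon> G n r)) = u G" for G
  proof -
    have "small_set \<epsilon> G n r = {v\<in>{1..n}. G \<in> I v}" by (auto simp: small_set_def I_def)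
    thus ?thesis by (simp add: u_def indicator_def sum.If_cases Int_def)
  qed
  have int: "integrable ?M u"
    unfolding u_def by (intro Bochner_Integration.integrable_sum measure_pmf.integrable_const_bound[where B=1]) auto
  have "measure_pmf.prob (Gnp_col n p r) {G. real (card (small_set \<epsilon> G n r)) > c}
      \<le> measure ?M {G\<in>space ?M. u G \<ge> c}"
    by (rule measure_pmf.finite_measure_mono) (auto simp: card_small)
  also have "\<dots> \<le> (\<integral>G. u G \<partial>?M) / c"
    by (rule integral_Markov_inequality_measure[OF int, where A=UNIV]) (auto simp: c u_def intro!: sum_nonneg)
  also have "(\<integral>G. u G \<partial>?M) = (\<Sum>v\<in>{1..n}. measure_pmf.prob (Gnp_col n p r) (I v))"
    unfolding u_def by (subst Bochner_Integration.integral_sum) (auto intro!: measure_pmf.integrable_const_bound[where B=1])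
  also have "\<dots> \<le> (\<Sum>v\<in>{1..n}. real r * (exp (- (p / r) * (1 - x) * (real k - 1)) / x powr t))"
    unfolding I_def by (intro sum_mono prob_small_vertex_le[OF nk r p x t]) simp
  finally show ?thesis using c by (simp add: divide_right_mono)
qed

section \<open>Elementary estimates\<close>

lemma power_le_exp_mult_fact: "real m ^ m \<le> exp (real m) * fact m"
proof (induction m)
  case 0 thus ?case by simp
next
  case (Suc m)
  have step: "real (Suc m) ^ m \<le> exp 1 * real m ^ m"
  proof (cases "m = 0")
    case True thus ?thesis by simp
  next
    case False
    have "(1 + 1 / real m) ^ m \<le> exp 1"
      using exp_ge_one_plus_x_over_n_power_n[of m 1] False by simp
    moreover have "real (Suc m) ^ m = (1 + 1 / real m) ^ m * real m ^ m"
      using False by (simp add: power_mult_distrib[symmetric] field_simps)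
    ultimately show ?thesis by (simp add: mult_right_mono)
  qed
  have "real (Suc m) ^ Suc m = real (Suc m) * real (Suc m) ^ m" by simp
  also have "\<dots> \<le> real (Suc m) * (exp 1 * real m ^ m)"
    by (intro mult_left_mono step) auto
  also have "\<dots> \<le> real (Suc m) * (exp 1 * (exp (real m) * fact m))"
    by (intro mult_left_mono Suc.IH) auto
  also have "\<dots> = exp (real (Suc m)) * fact (Suc m)"
    by (simp add: exp_add[symmetric] algebra_simps)
  finally show ?case .
qed

lemma binomial_le_exp_div_power:
  assumes "m \<ge> 1"
  shows "real (N choose m) \<le> (exp 1 * real N / real m) ^ m"
proof -
  have f: "fact m > (0::real)" by simp
  have "real (N choose m) * fact m \<le> real N ^ m"
    using binomial_fact_pow[of N m] by (metis of_nat_fact of_nat_le_iff of_nat_mult of_nat_power)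
  hence "real (N choose m) \<le> real N ^ m / fact m" using f by (simp add: field_simps)
  also have "\<dots> \<le> real N ^ m / (real m ^ m / exp (real m))"
    using power_le_exp_mult_fact[of m] assms by (intro divide_left_mono) (auto simp: field_simps)
  also have "\<dots> = (exp 1 * real N / real m) ^ m"
    using assms by (simp add: power_divide power_mult_distrib exp_of_nat_mult[symmetric] field_simps)
  finally show ?thesis .
qed

lemma sum_power_le_double:
  fixes \<beta> :: real
  assumes "0 \<le> \<beta>" "\<beta> \<le> 1/2"
  shows "(\<Sum>s\<in>{1..M}. \<beta> ^ s) \<le> 2 * \<beta>"
proof -
  have eq: "(1 - \<beta>) * (\<Sum>s\<in>{1..M}. \<beta> ^ s) = \<beta> - \<beta> ^ (M + 1)" for M
  proof (induction M)
    case 0 show ?case by simp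
  next
    case (Suc M)
    have "(1 - \<beta>) * (\<Sum>s\<in>{1..Suc M}. \<beta> ^ s) = (1 - \<beta>) * (\<Sum>s\<in>{1..M}. \<beta> ^ s) + (1 - \<beta>) * \<beta> ^ Suc M"
      by (simp add: algebra_simps)
    also have "\<dots> = \<beta> - \<beta> ^ (Suc M + 1)" by (simp only: Suc.IH) (simp add: algebra_simps)
    finally show ?case .
  qed
  have S0: "0 \<le> (\<Sum>s\<in>{1..M}. \<beta> ^ s)" using assms by (intro sum_nonneg) auto
  have "1/2 * (\<Sum>s\<in>{1..M}. \<beta> ^ s) \<le> (1 - \<beta>) * (\<Sum>s\<in>{1..M}. \<beta> ^ s)"
    using assms S0 by (intro mult_right_mono) auto
  moreover have "\<beta> ^ (M + 1) \<ge> 0" using assms by simp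
  ultimately show ?thesis using eq[of M] assms by linarith
qed

lemma exp1_pow_101_le: "exp (1::real) ^ 101 \<le> 100 ^ 100"
proof -
  have "exp (1::real) ^ 101 \<le> 3 ^ 101"
    using exp_le by (intro power_mono) auto
  also have "(3::real) ^ 101 \<le> 100 ^ 100" by simp
  finally show ?thesis .
qed

lemma dense_term_le:
  fixes n s :: nat and L c1 p :: real
  assumes n: "n > 0" and L: "L > 0" and p: "p = c1 * L / n" and c1: "c1 > 0"
  assumes y1: "exp 1 * c1 / (100 * L) \<le> 1"
  assumes s: "s \<ge> 1" "real s \<le> n / L\<^sup>2"
  shows "real (n choose s) * (real ((s * s) choose (100 * s + 1)) * p ^ (100 * s + 1)) \<le> (c1 ^ 100 / L ^ 98) ^ s"
proof -
  define m where "m = 100 * s + 1"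
  define y where "y = exp 1 * s * p / 100"
  have p0: "p \<ge> 0" using p c1 L by simp
  have y0: "y \<ge> 0" using p0 by (simp add: y_def)
  have y1': "y \<le> 1"
  proof -
    have "exp 1 * (real s * p) / 100 \<le> exp 1 * ((n / L\<^sup>2) * p) / 100"
      using mult_right_mono[OF s(2) p0] by (intro divide_right_mono mult_left_mono) auto
    hence "y \<le> exp 1 * (n / L\<^sup>2) * p / 100" by (simp add: y_def mult.assoc)
    also have "\<dots> = exp 1 * c1 / (100 * L)" using n L by (simp add: p power2_eq_square field_simps)
    finally show ?thesis using y1 by simp
  qed
  have m1: "m \<ge> 1" by (simp add: m_def)
  have "real ((s * s) choose m) * p ^ m \<le> (exp 1 * real (s * s) / real m) ^ m * p ^ m"
    using binomial_le_exp_div_power[OF m1, of "s * s"] p0 by (intro mult_right_mono) auto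
  also have "\<dots> = (exp 1 * real (s * s) / real m * p) ^ m" by (simp only: power_mult_distrib)
  also have "\<dots> \<le> y ^ m"
  proof (intro power_mono)
    have "real (s * s) / real m \<le> real s / 100"
      using s by (simp add: m_def field_simps)
    hence "exp 1 * (real (s * s) / real m) * p \<le> exp 1 * (real s / 100) * p"
      using p0 by (intro mult_right_mono mult_left_mono) auto
    thus "exp 1 * real (s * s) / real m * p \<le> y" by (simp add: y_def)
    show "0 \<le> exp 1 * real (s * s) / real m * p" using p0 by simp
  qed
  also have "\<dots> \<le> y ^ (100 * s)"
    using y0 y1' by (intro power_decreasing) (auto simp: m_def)
  finally have A: "real ((s * s) choose m) * p ^ m \<le> y ^ (100 * s)" .
  have B: "real (n choose s) \<le> (exp 1 * real n / real s) ^ s" by (rule binomial_le_exp_div_power[OF s(1)])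
  have "real (n choose s) * real ((s * s) choose m) * p ^ m \<le> (exp 1 * real n / real s) ^ s * y ^ (100 * s)"
    using A B p0 by (simp only: mult.assoc) (intro mult_mono, auto)
  also have "\<dots> = (exp 1 * real n / real s * y ^ 100) ^ s"
    by (simp only: power_mult power_mult_distrib)
  also have "\<dots> \<le> (c1 ^ 100 / L ^ 98) ^ s"
  proof (intro power_mono)
    show "0 \<le> exp 1 * real n / real s * y ^ 100" using y0 by simp
    have "exp 1 * real n / real s * y ^ 100 = (exp 1 ^ 101 / 100 ^ 100) * (real n * real s ^ 99 * p ^ 100)"
    proof -
      have e1: "real s ^ 100 = real s * real s ^ 99" by (subst power_Suc[symmetric]) simp
      have e2: "exp (1::real) ^ 101 = exp 1 * exp 1 ^ 100" by (subst power_Suc[symmetric]) simp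
      show ?thesis using s by (simp add: y_def power_mult_distrib power_divide field_simps e1 e2)
    qed
    also have "\<dots> \<le> 1 * (real n * real s ^ 99 * p ^ 100)"
      using exp1_pow_101_le p0 by (intro mult_right_mono) auto
    also have "\<dots> \<le> real n * (n / L\<^sup>2) ^ 99 * p ^ 100"
      using s p0 unfolding mult_1_left by (intro mult_right_mono mult_left_mono power_mono) auto
    also have "\<dots> = c1 ^ 100 / L ^ 98"
      using n L power_Suc[of "real n" 99] by (simp add: p power_divide power_mult_distrib field_simps power_mult[symmetric])
    finally show "exp 1 * real n / real s * y ^ 100 \<le> c1 ^ 100 / L ^ 98" by simp
  qed
  finally show ?thesis by (simp add: m_def mult.assoc)
qed

lemma dense_sum_le:
  fixes n :: nat and L c1 p :: real
  assumes n: "n > 0" and L: "L > 0" and p: "p = c1 * L / n" and c1: "c1 > 0"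
  assumes y1: "exp 1 * c1 / (100 * L) \<le> 1" and b: "c1 ^ 100 / L ^ 98 \<le> 1/2"
  shows "(\<Sum>s\<in>{1..nat \<lfloor>n / L\<^sup>2\<rfloor>}. real (n choose s) * (real ((s * s) choose (100 * s + 1)) * p ^ (100 * s + 1)))
         \<le> 2 * (c1 ^ 100 / L ^ 98)"
proof -
  have "(\<Sum>s\<in>{1..nat \<lfloor>n / L\<^sup>2\<rfloor>}. real (n choose s) * (real ((s * s) choose (100 * s + 1)) * p ^ (100 * s + 1)))
      \<le> (\<Sum>s\<in>{1..nat \<lfloor>n / L\<^sup>2\<rfloor>}. (c1 ^ 100 / L ^ 98) ^ s)"
  proof (rule sum_mono)
    fix s assume s: "s \<in> {1..nat \<lfloor>n / L\<^sup>2\<rfloor>}"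
    hence "real s \<le> n / L\<^sup>2" by (simp add: le_nat_floor) linarith
    thus "real (n choose s) * (real ((s * s) choose (100 * s + 1)) * p ^ (100 * s + 1)) \<le> (c1 ^ 100 / L ^ 98) ^ s"
      using s by (intro dense_term_le[OF n L p c1 y1]) auto
  qed
  also have "\<dots> \<le> 2 * (c1 ^ 100 / L ^ 98)"
    using b c1 L by (intro sum_power_le_double) auto
  finally show ?thesis .
qed

lemma binomial_le_power: "real (N choose m) \<le> real N ^ m"
proof -
  have "(N choose m) * fact m \<le> N ^ m" by (rule binomial_fact_pow)
  moreover have "(N choose m) \<le> (N choose m) * fact m" by simp
  ultimately show ?thesis by (metis of_nat_le_iff of_nat_power order.trans)
qed

lemma exp_degree_deficit_le:
  fixes k k0 r s :: nat and p x \<delta> L :: real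
  assumes p01: "0 \<le> p" "p \<le> 1" and r: "r \<ge> 1" and x: "0 < x" "x \<le> 1"
    and H1: "(1 + 2 * \<delta>) * L \<le> (p / r) * (1 - x) * k0 * k"
  shows "exp (- (p / r) * (1 - x) * k0 * (real k - s)) \<le> exp (- (1 + 2 * \<delta>) * L) * exp (real k0 * s)"
proof -
  have "(p / r) * (1 - x) \<le> 1 * 1"
    using p01 r x by (intro mult_mono) (auto simp: field_simps)
  hence "(p / r) * (1 - x) * (real k0 * real s) \<le> 1 * (real k0 * real s)"
    by (intro mult_right_mono) auto
  moreover define a where "a = (p / r) * (1 - x) * k0"
  ultimately have as: "a * s \<le> real k0 * s" by (simp add: mult.assoc)
  have eq0: "- c * (1 - x) * k0 * (real k - s) = - (c * (1 - x) * k0 * k) + c * (1 - x) * k0 * s"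
    for c :: real
    by (simp add: algebra_simps)
  have eq: "- (p / r) * (1 - x) * k0 * (real k - s) = - (a * k) + a * s"
    unfolding a_def by (rule eq0)
  have H1': "(1 + 2 * \<delta>) * L \<le> a * k" using H1 by (simp add: a_def)
  have "- (p / r) * (1 - x) * k0 * (real k - s) \<le> - (1 + 2 * \<delta>) * L + real k0 * s"
    unfolding eq using as H1' by linarith
  thus ?thesis by (simp add: exp_add[symmetric])
qed

lemma power_mult_power_pred_le:
  fixes n s :: nat and L c1 p :: real
  assumes n: "n > 0" and L: "L = ln n" and p: "p = c1 * L / n" and c1L: "1 \<le> c1 * L" and s: "s \<ge> 1"
  shows "real n ^ s * p ^ (s - 1) \<le> exp L * (c1 * L) ^ s"
proof -
  have np: "real n * p = c1 * L" using n by (simp add: p)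
  have "real n ^ s * p ^ (s - 1) = real n * (real n * p) ^ (s - 1)"
    using s by (cases s) (auto simp: power_mult_distrib)
  also have "\<dots> \<le> real n * (c1 * L) ^ s"
    using c1L s by (simp add: np) (intro mult_left_mono power_increasing, auto)
  also have "real n * (c1 * L) ^ s = exp L * (c1 * L) ^ s" using n by (simp add: L)
  finally show ?thesis .
qed

lemma cluster_term_le:
  fixes n k r k0 s :: nat and L c1 p x t \<delta> \<Lambda> :: real
  assumes n: "n > 0" and L: "L = ln n" and p: "p = c1 * L / n" and c1L: "1 \<le> c1 * L"
  assumes p01: "0 \<le> p" "p \<le> 1" and r: "r \<ge> 1" and x: "0 < x" "x \<le> 1"
  assumes H1: "(1 + 2 * \<delta>) * L \<le> (p / r) * (1 - x) * k0 * k"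
  assumes H2: "exp (- \<delta> * L) \<le> x powr (t * k0)"
  assumes s: "s \<ge> 1" "real s \<le> \<Lambda>"
  shows "real (n choose s) * (real ((s * s) choose (s - 1)) * (real (s choose k0) *
          (real r ^ k0 * (p ^ (s - 1) * exp (- (p / r) * (1 - x) * k0 * (real k - s)) / x powr (t * k0)))))
         \<le> real r ^ k0 * exp (- \<delta> * L) * (2 * exp (real k0) * c1 * L * \<Lambda>\<^sup>2) ^ s"
proof -
  define E where "E = exp (- (p / r) * (1 - x) * k0 * (real k - s))"
  define X where "X = x powr (t * k0)"
  have X0: "X > 0" using x by (simp add: X_def)
  have E0: "E \<ge> 0" by (simp add: E_def)
  have E: "E \<le> exp (- (1 + 2 * \<delta>) * L) * exp (real k0 * s)"
    unfolding E_def by (rule exp_degree_deficit_le[OF p01 r x H1])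
  have X: "1 / X \<le> exp (\<delta> * L)"
    using H2 X0 by (simp add: X_def field_simps exp_minus)
  have P: "real n ^ s * p ^ (s - 1) \<le> exp L * (c1 * L) ^ s"
    by (rule power_mult_power_pred_le[OF n L p c1L s(1)])
  have "real (n choose s) * (real ((s * s) choose (s - 1)) * (real (s choose k0) * (real r ^ k0 * (p ^ (s - 1) * E / X))))
      = real r ^ k0 * (real (n choose s) * p ^ (s - 1)) * real ((s * s) choose (s - 1)) * real (s choose k0) * E * (1 / X)"
    by (simp add: field_simps)
  also have "\<dots> \<le> real r ^ k0 * (real n ^ s * p ^ (s - 1)) * real ((s * s) choose (s - 1)) * real (s choose k0) * E * (1 / X)"
    using X0 E0 p01 by (intro mult_right_mono mult_left_mono binomial_le_power) auto
  also have "\<dots> \<le> real r ^ k0 * (exp L * (c1 * L) ^ s) * real ((s * s) choose (s - 1)) * real (s choose k0) * E * (1 / X)"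
    using X0 E0 p01 by (intro mult_right_mono mult_left_mono P) auto
  also have "\<dots> \<le> real r ^ k0 * (exp L * (c1 * L) ^ s) * (real s * real s) ^ s * real (s choose k0) * E * (1 / X)"
  proof -
    have "real ((s * s) choose (s - 1)) \<le> real (s * s) ^ (s - 1)" by (rule binomial_le_power)
    also have "\<dots> \<le> real (s * s) ^ s"
    proof (rule power_increasing)
      have "1 * 1 \<le> s * s" using s by (intro mult_mono) auto
      thus "1 \<le> real (s * s)" by linarith
    qed simp
    finally show ?thesis using X0 E0 c1L by (intro mult_right_mono mult_left_mono) auto
  qed
  also have "\<dots> \<le> real r ^ k0 * (exp L * (c1 * L) ^ s) * (real s * real s) ^ s * 2 ^ s * E * (1 / X)"
    using X0 E0 c1L binomial_le_pow2[of s k0] by (intro mult_right_mono mult_left_mono) (auto simp flip: of_nat_power)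
  also have "\<dots> \<le> real r ^ k0 * (exp L * (c1 * L) ^ s) * (real s * real s) ^ s * 2 ^ s * (exp (- (1 + 2 * \<delta>) * L) * exp (real k0 * s)) * exp (\<delta> * L)"
    using X0 E0 c1L E X by (intro mult_mono mult_right_mono mult_left_mono) auto
  also have "\<dots> = real r ^ k0 * exp (- \<delta> * L) * (2 * exp (real k0) * c1 * L * (real s * real s)) ^ s"
  proof -
    have "exp L * exp (- (1 + 2 * \<delta>) * L) * exp (\<delta> * L) = exp (- \<delta> * L)"
      by (simp add: exp_add[symmetric] algebra_simps)
    moreover have "exp (real k0 * s) = exp (real k0) ^ s" by (simp add: exp_of_nat_mult[symmetric] mult.commute)
    ultimately show ?thesis by (simp add: power_mult_distrib algebra_simps)
  qed
  also have "\<dots> \<le> real r ^ k0 * exp (- \<delta> * L) * (2 * exp (real k0) * c1 * L * \<Lambda>\<^sup>2) ^ s"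
  proof -
    have cl0: "0 \<le> c1 * L" using c1L by linarith
    have pos0: "0 \<le> (2 * exp (real k0)) * (c1 * L)" by (rule mult_nonneg_nonneg) (simp_all add: cl0)
    hence pos: "0 \<le> 2 * exp (real k0) * c1 * L" by (simp add: mult.assoc)
    have ss: "real s * real s \<le> \<Lambda>\<^sup>2" using s by (simp add: power2_eq_square mult_mono)
    have m: "2 * exp (real k0) * c1 * L * (real s * real s) \<le> 2 * exp (real k0) * c1 * L * \<Lambda>\<^sup>2"
      by (rule mult_left_mono[OF ss pos])
    have b0: "0 \<le> 2 * exp (real k0) * c1 * L * (real s * real s)" using pos by simp
    have "(2 * exp (real k0) * c1 * L * (real s * real s)) ^ s \<le> (2 * exp (real k0) * c1 * L * \<Lambda>\<^sup>2) ^ s"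
      by (rule power_mono[OF m b0])
    thus ?thesis by (rule mult_left_mono) simp
  qed
  finally show ?thesis by (simp add: E_def X_def)
qed

lemma cluster_sum_le:
  fixes n k r k0 :: nat and L c1 p x t \<delta> \<Lambda> :: real
  assumes n: "n > 0" and L: "L = ln n" and p: "p = c1 * L / n" and c1L: "1 \<le> c1 * L"
  assumes p01: "0 \<le> p" "p \<le> 1" and r: "r \<ge> 1" and x: "0 < x" "x \<le> 1"
  assumes H1: "(1 + 2 * \<delta>) * L \<le> (p / r) * (1 - x) * k0 * k"
  assumes H2: "exp (- \<delta> * L) \<le> x powr (t * k0)"
  assumes \<Lambda>: "\<Lambda> \<ge> 1"
  shows "(\<Sum>s\<in>{1..nat \<lfloor>\<Lambda>\<rfloor>}. real (n choose s) * (real ((s * s) choose (s - 1)) * (real (s choose k0) *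
          (real r ^ k0 * (p ^ (s - 1) * exp (- (p / r) * (1 - x) * k0 * (real k - s)) / x powr (t * k0))))))
         \<le> \<Lambda> * (real r ^ k0 * exp (- \<delta> * L) * (2 * exp (real k0) * c1 * L * \<Lambda>\<^sup>2) powr \<Lambda>)"
proof -
  define W where "W = 2 * exp (real k0) * c1 * L * \<Lambda>\<^sup>2"
  have W1: "W \<ge> 1"
  proof -
    have "1 \<le> exp (real k0)" by simp
    hence e1: "1 \<le> 2 * exp (real k0)" by linarith
    have l1: "1 \<le> \<Lambda>\<^sup>2" using \<Lambda> by (simp add: one_le_power)
    have h: "1 * 1 \<le> (2 * exp (real k0)) * (c1 * L)"
      by (rule mult_mono[OF e1 c1L]) auto
    have "1 * 1 * 1 \<le> (2 * exp (real k0)) * (c1 * L) * \<Lambda>\<^sup>2"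
      by (rule mult_mono[OF h l1]) (use h in linarith, simp)
    thus ?thesis by (simp add: W_def mult.assoc)
  qed
  have "(\<Sum>s\<in>{1..nat \<lfloor>\<Lambda>\<rfloor>}. real (n choose s) * (real ((s * s) choose (s - 1)) * (real (s choose k0) *
          (real r ^ k0 * (p ^ (s - 1) * exp (- (p / r) * (1 - x) * k0 * (real k - s)) / x powr (t * k0))))))
      \<le> (\<Sum>s\<in>{1..nat \<lfloor>\<Lambda>\<rfloor>}. real r ^ k0 * exp (- \<delta> * L) * W powr \<Lambda>)"
  proof (rule sum_mono)
    fix s assume s: "s \<in> {1..nat \<lfloor>\<Lambda>\<rfloor>}"
    hence s': "s \<ge> 1" "real s \<le> \<Lambda>" by (auto simp: le_nat_floor) linarith
    have "real (n choose s) * (real ((s * s) choose (s - 1)) * (real (s choose k0) *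
          (real r ^ k0 * (p ^ (s - 1) * exp (- (p / r) * (1 - x) * k0 * (real k - s)) / x powr (t * k0)))))
         \<le> real r ^ k0 * exp (- \<delta> * L) * W ^ s"
      unfolding W_def by (rule cluster_term_le[OF n L p c1L p01 r x H1 H2 s'])
    also have "W ^ s \<le> W powr \<Lambda>"
      using W1 s' by (simp add: powr_realpow[symmetric]) (intro powr_mono, auto)
    hence "real r ^ k0 * exp (- \<delta> * L) * W ^ s \<le> real r ^ k0 * exp (- \<delta> * L) * W powr \<Lambda>"
      by (intro mult_left_mono) auto
    finally show "real (n choose s) * (real ((s * s) choose (s - 1)) * (real (s choose k0) *
          (real r ^ k0 * (p ^ (s - 1) * exp (- (p / r) * (1 - x) * k0 * (real k - s)) / x powr (t * k0)))))
         \<le> real r ^ k0 * exp (- \<delta> * L) * W powr \<Lambda>" .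
  qed
  also have "\<dots> = real (nat \<lfloor>\<Lambda>\<rfloor>) * (real r ^ k0 * exp (- \<delta> * L) * W powr \<Lambda>)" by simp
  also have "\<dots> \<le> \<Lambda> * (real r ^ k0 * exp (- \<delta> * L) * W powr \<Lambda>)"
    using \<Lambda> by (intro mult_right_mono) auto
  finally show ?thesis by (simp add: W_def)
qed

lemma many_small_bound_le:
  fixes n k r :: nat and L p x t \<theta> a1 a2 \<gamma> :: real
  assumes n: "n > 0" and L: "L = ln n" and L0: "L \<ge> 0"
  assumes HA1: "a1 * L \<le> (p / r) * (1 - x) * (real k - 1)"
  assumes HA2: "exp (- a2 * L) \<le> x powr t" and x: "x > 0"
  assumes th: "\<theta> - a1 + a2 \<le> - \<gamma>"
  shows "real n * (real r * (exp (- (p / r) * (1 - x) * (real k - 1)) / x powr t)) / real n powr (1 - \<theta>)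
         \<le> real r * exp (- \<gamma> * L)"
proof -
  have n1: "real n powr (1 - \<theta>) = exp ((1 - \<theta>) * L)" using n by (simp add: powr_def L)
  have n2: "real n = exp L" using n by (simp add: L)
  have nn: "real n / real n powr (1 - \<theta>) = exp (\<theta> * L)"
    unfolding n1 by (subst n2) (simp add: exp_diff[symmetric] algebra_simps)
  have "real n * (real r * (exp (- (p / r) * (1 - x) * (real k - 1)) / x powr t)) / real n powr (1 - \<theta>)
       = real r * (exp (\<theta> * L) * exp (- (p / r) * (1 - x) * (real k - 1)) * (1 / x powr t))"
  proof -
    have gen: "n' * (r' * (E / X)) / P = r' * ((n' / P) * E * (1 / X))" if "X \<noteq> 0" "P \<noteq> 0" for n' r' E X P :: real
      using that by (simp add: field_simps)
    show ?thesis unfolding nn[symmetric] using x n by (intro gen) auto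
  qed
  also have "\<dots> \<le> real r * (exp (\<theta> * L) * exp (- a1 * L) * exp (a2 * L))"
  proof (intro mult_left_mono mult_mono)
    show "exp (- (p / r) * (1 - x) * (real k - 1)) \<le> exp (- a1 * L)" using HA1 by simp
    show "1 / x powr t \<le> exp (a2 * L)" using HA2 x
      by (simp add: field_simps exp_minus)
  qed auto
  also have "\<dots> = real r * exp ((\<theta> - a1 + a2) * L)" by (simp add: exp_add[symmetric] algebra_simps)
  also have "\<dots> \<le> real r * exp (- \<gamma> * L)"
  proof -
    have "(\<theta> - a1 + a2) * L \<le> (- \<gamma>) * L" by (rule mult_right_mono[OF th L0])
    thus ?thesis by (intro mult_left_mono) auto
  qed
  finally show ?thesis .
qed


lemma small_eps_consequences:
  fixes K \<alpha> \<epsilon> :: real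
  assumes \<alpha>1: "\<alpha> \<ge> 1" and K: "K \<ge> \<alpha> + 1" and \<epsilon>: "0 < \<epsilon>" "\<epsilon> \<le> 1 / (4 * K\<^sup>2)"
  shows "\<epsilon> \<le> 1 / 8" "\<epsilon>\<^sup>2 * ln (2 * K) \<le> 1 / (16 * \<alpha>)" "\<epsilon>\<^sup>2 * K * ln (2 * K) \<le> 1 / (4 * \<alpha>)"
proof -
  have K2: "K \<ge> 2" using \<alpha>1 K by simp
  have KK: "K\<^sup>2 \<ge> 4" using K2 power_mono[of 2 K 2] by simp
  show "\<epsilon> \<le> 1 / 8"
  proof -
    have "1 / (4 * K\<^sup>2) \<le> 1 / (4 * 4)" using KK by (intro divide_left_mono) auto
    thus ?thesis using \<epsilon> by simp
  qed
  have ln0: "0 \<le> ln (2 * K)" using K2 by simp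
  have lnK: "ln (2 * K) \<le> 2 * K" using ln_le_minus_one[of "2 * K"] K2 by simp
  have e2: "\<epsilon>\<^sup>2 \<le> 1 / (16 * K ^ 4)"
  proof -
    have "\<epsilon>\<^sup>2 \<le> (1 / (4 * K\<^sup>2))\<^sup>2" using \<epsilon> by (intro power_mono) auto
    also have "\<dots> = 1 / (16 * K ^ 4)" by (simp add: power2_eq_square field_simps) (simp add: power_def)
    finally show ?thesis .
  qed
  have "\<epsilon>\<^sup>2 * ln (2 * K) \<le> 1 / (16 * K ^ 4) * (2 * K)"
    using e2 lnK ln0 by (intro mult_mono) auto
  also have "\<dots> = 1 / (8 * K ^ 3)" using K2 by (simp add: field_simps power_def)
  also have "\<dots> \<le> 1 / (16 * \<alpha>)"
  proof (intro divide_left_mono)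
    have "K ^ 3 = K * K * K" by (simp add: power_def)
    also have "\<dots> \<ge> 2 * 2 * K" using K2 by (intro mult_mono) auto
    finally show "16 * \<alpha> \<le> 8 * K ^ 3" using K \<alpha>1 by linarith
  qed (use \<alpha>1 K2 in auto)
  finally show "\<epsilon>\<^sup>2 * ln (2 * K) \<le> 1 / (16 * \<alpha>)" .
  have "\<epsilon>\<^sup>2 * K * ln (2 * K) \<le> 1 / (16 * K ^ 4) * K * (2 * K)"
    using e2 lnK ln0 K2 by (intro mult_mono) auto
  also have "\<dots> = 1 / (8 * K\<^sup>2)" using K2 by (simp add: field_simps power_def)
  also have "\<dots> \<le> 1 / (4 * \<alpha>)"
  proof (intro divide_left_mono)
    have "K\<^sup>2 = K * K" by (simp add: power2_eq_square)
    also have "\<dots> \<ge> 2 * K" using K2 by (intro mult_right_mono) auto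
    finally show "4 * \<alpha> \<le> 8 * K\<^sup>2" using K \<alpha>1 by linarith
  qed (use \<alpha>1 K2 in auto)
  finally show "\<epsilon>\<^sup>2 * K * ln (2 * K) \<le> 1 / (4 * \<alpha>)" .
qed

section \<open>The regime \<open>p = (1 + \<epsilon>) p\<^sub>r\<close>\<close>

lemma alpha_r_ge_2: "r \<ge> 3 \<Longrightarrow> alpha_r r \<ge> 2"
  by (simp add: alpha_r_def)

definition many_small :: "real \<Rightarrow> nat \<Rightarrow> nat \<Rightarrow> cgraph set" where
  "many_small \<epsilon> n r =
     {G. real n powr (1 - \<epsilon> / (2 * real r * real (alpha_r r))) < real (card (small_set \<epsilon> G n r))}"

definition small_cluster :: "real \<Rightarrow> nat \<Rightarrow> nat \<Rightarrow> cgraph set" where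
  "small_cluster \<epsilon> n r = {G. \<exists>S \<subseteq> {1..n}. real (card S) \<le> ln (ln (real n)) \<and> induced_connected G S
     \<and> r * alpha_r r < card (S \<inter> small_set \<epsilon> G n r)}"

definition dense_spot :: "nat \<Rightarrow> cgraph set" where
  "dense_spot n = {G. \<exists>S \<subseteq> {1..n}. real (card S) \<le> real n / (ln (real n))\<^sup>2 \<and> 100 * card S < spanned_edges G S}"

text \<open>One term \<open>k\<close> of the sequence; \<open>weight\<close> and \<open>threshold\<close> are the \<open>x\<close> and \<open>t\<close> of the
  Chernoff bound.\<close>

locale sparse_regime =
  fixes r k :: nat and \<epsilon> :: real
  assumes r_ge_3: "r \<ge> 3" and k_ge_2: "k \<ge> 2"
    and eps_pos: "0 < \<epsilon>" and eps_small: "\<epsilon> \<le> 1 / (4 * (real (r * alpha_r r + 1))\<^sup>2)"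
begin

definition "n = r * k"
definition "L = ln (real n)"
definition "p = (1 + \<epsilon>) * p_r r n"
definition "ra = real r * real (alpha_r r)"
definition "c1 = (1 + \<epsilon>) * real r / real (alpha_r r)"
definition "weight = 1 / (2 * (ra + 1))"
definition "threshold = \<epsilon>\<^sup>2 / real r * L"

abbreviation "k0 \<equiv> r * alpha_r r + 1"

lemma alpha_pos: "real (alpha_r r) > 0"
  using alpha_r_ge_2[OF r_ge_3] by simp

lemma ra_pos: "ra > 0"
  using alpha_pos r_ge_3 by (simp add: ra_def)

lemma real_k0: "real k0 = ra + 1"
  by (simp add: ra_def)

lemma n_pos: "n > 0"
  using r_ge_3 k_ge_2 by (simp add: n_def)

lemma L_pos: "L > 0"
proof -
  have "3 * 2 \<le> real r * real k" using r_ge_3 k_ge_2 by (intro mult_mono) auto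
  hence "1 < real n" by (simp add: n_def)
  thus ?thesis unfolding L_def by (rule ln_gt_zero)
qed

lemma c1_pos: "c1 > 0"
  using alpha_pos r_ge_3 eps_pos by (simp add: c1_def)

lemma p_eq: "p = c1 * L / real n"
  using alpha_pos r_ge_3 by (simp add: p_def p_r_def c1_def L_def)

lemma p_nonneg: "0 \<le> p"
  using c1_pos L_pos n_pos by (simp add: p_eq)

lemma p_le_1: "c1 * L \<le> exp L \<Longrightarrow> p \<le> 1"
  using n_pos by (simp add: p_eq L_def)

lemma p_div_r_mult_k: "p / r * real k = (1 + \<epsilon>) * L / ra"
  using r_ge_3 k_ge_2 alpha_pos by (simp add: p_eq c1_def ra_def n_def field_simps)

lemma weight: "0 < weight" "weight \<le> 1/2"
  using ra_pos by (auto simp: weight_def field_simps)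

lemma threshold_ge_eta: "eta \<epsilon> r * ln (real n) \<le> threshold"
proof -
  have "eta \<epsilon> r \<le> \<epsilon>\<^sup>2 / real r" by (simp add: eta_def eta0_def)
  thus ?thesis using L_pos unfolding threshold_def L_def by (intro mult_right_mono) auto
qed

lemma small_eps:
  "\<epsilon> \<le> 1 / 8" "\<epsilon>\<^sup>2 * ln (2 * (ra + 1)) \<le> 1 / (16 * real (alpha_r r))"
  "\<epsilon>\<^sup>2 * (ra + 1) * ln (2 * (ra + 1)) \<le> 1 / (4 * real (alpha_r r))"
proof -
  have "real (alpha_r r) + 1 \<le> ra + 1"
    using alpha_pos r_ge_3 by (simp add: ra_def)
  moreover have "\<epsilon> \<le> 1 / (4 * (ra + 1)\<^sup>2)"
    using eps_small by (simp only: real_k0)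
  ultimately show "\<epsilon> \<le> 1 / 8" "\<epsilon>\<^sup>2 * ln (2 * (ra + 1)) \<le> 1 / (16 * real (alpha_r r))"
    "\<epsilon>\<^sup>2 * (ra + 1) * ln (2 * (ra + 1)) \<le> 1 / (4 * real (alpha_r r))"
    using small_eps_consequences[of "real (alpha_r r)" "ra + 1" \<epsilon>] alpha_r_ge_2[OF r_ge_3] eps_pos
    by auto
qed

lemma weight_cost:
  assumes "\<epsilon>\<^sup>2 * m * ln (2 * (ra + 1)) \<le> 1 / (c * real (alpha_r r))" "c > 0"
  shows "exp (- (1 / (c * ra)) * L) \<le> weight powr (threshold * m)"
proof -
  have ln_weight: "ln weight = - ln (2 * (ra + 1))"
    using ra_pos by (simp add: weight_def ln_div)
  have "\<epsilon>\<^sup>2 * m * ln (2 * (ra + 1)) / r * L \<le> 1 / (c * real (alpha_r r)) / r * L"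
    using assms L_pos r_ge_3 by (intro mult_right_mono divide_right_mono) auto
  hence "- (1 / (c * ra)) * L \<le> threshold * m * ln weight"
    using r_ge_3 by (simp add: ln_weight threshold_def ra_def field_simps)
  thus ?thesis using weight(1) by (simp add: powr_def)
qed

lemma prob_many_small_le:
  assumes "c1 * L \<le> exp L"
  shows "measure_pmf.prob (Gnp_col n p r) (many_small \<epsilon> n r) \<le> real r * exp (- (1 / (8 * ra)) * L)"
proof -
  have hits: "1 / (4 * ra) * L \<le> (p / r) * (1 - weight) * (real k - 1)"
  proof -
    have "L / ra * (1/2 * (1/2)) \<le> (1 + \<epsilon>) * L / ra * ((1 - weight) * ((real k - 1) / k))"
    proof (rule mult_mono)
      show "L / ra \<le> (1 + \<epsilon>) * L / ra" using eps_pos L_pos ra_pos by (simp add: divide_right_mono)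
      show "1/2 * (1/2) \<le> (1 - weight) * ((real k - 1) / k)"
        using weight k_ge_2 by (intro mult_mono) (auto simp: field_simps)
    qed (use L_pos ra_pos eps_pos weight in auto)
    also have "\<dots> = (p / r * real k) * ((1 - weight) * ((real k - 1) / k))"
      by (simp only: p_div_r_mult_k)
    also have "\<dots> = (p / r) * (1 - weight) * (real k - 1)"
    proof -
      have "real k \<noteq> 0" "real r \<noteq> 0" using k_ge_2 r_ge_3 by simp_all
      thus ?thesis by (simp add: field_simps)
    qed
    finally show ?thesis by (simp add: field_simps)
  qed
  have cost: "exp (- (1 / (16 * ra)) * L) \<le> weight powr threshold"
    using weight_cost[of 1 16] small_eps(2) by simp
  have exponent: "\<epsilon> / (2 * real r * real (alpha_r r)) - 1 / (4 * ra) + 1 / (16 * ra) \<le> - (1 / (8 * ra))"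
    using small_eps(1) ra_pos by (simp add: ra_def field_simps)
  have "measure_pmf.prob (Gnp_col n p r) (many_small \<epsilon> n r)
    \<le> real n * (real r * (exp (- (p / r) * (1 - weight) * (real k - 1)) / weight powr threshold))
      / real n powr (1 - \<epsilon> / (2 * real r * real (alpha_r r)))"
    using r_ge_3 weight(2) n_pos
    unfolding many_small_def
    by (intro prob_many_small_vertices_le[OF n_def _ p_nonneg p_le_1[OF assms] weight(1) _ threshold_ge_eta]) auto
  also have "\<dots> \<le> real r * exp (- (1 / (8 * ra)) * L)"
    using L_pos by (intro many_small_bound_le[OF n_pos L_def _ hits cost weight(1) exponent]) simp
  finally show ?thesis .
qed

lemma prob_small_cluster_le:
  assumes "c1 * L \<le> exp L" "1 \<le> c1 * L" "1 \<le> ln L"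
  shows "measure_pmf.prob (Gnp_col n p r) (small_cluster \<epsilon> n r)
    \<le> ln L * (real r ^ k0 * exp (- (1 / (4 * ra)) * L) * (2 * exp (real k0) * c1 * L * (ln L)\<^sup>2) powr (ln L))"
proof -
  have hits: "(1 + 2 * (1 / (4 * ra))) * L \<le> (p / r) * (1 - weight) * k0 * k"
  proof -
    have "(1 + 2 * (1 / (4 * ra))) * L = 1 * (L / ra * (ra + 1/2))"
      using ra_pos by (simp add: field_simps)
    also have "\<dots> \<le> (1 + \<epsilon>) * (L / ra * (ra + 1/2))"
      using eps_pos L_pos ra_pos by (intro mult_right_mono) auto
    also have "\<dots> = (p / r * real k) * ((1 - weight) * (ra + 1))"
    proof -
      have "(1 - weight) * (ra + 1) = ra + 1/2" using ra_pos by (simp add: weight_def field_simps)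
      thus ?thesis by (simp only: p_div_r_mult_k) simp
    qed
    finally show ?thesis unfolding real_k0 by (simp only: mult_ac)
  qed
  have cost: "exp (- (1 / (4 * ra)) * L) \<le> weight powr (threshold * k0)"
    unfolding real_k0 using weight_cost[of "ra + 1" 4] small_eps(3) by simp
  have "small_cluster \<epsilon> n r = {G. \<exists>S \<subseteq> {1..n}. real (card S) \<le> ln L \<and> induced_connected G S
      \<and> k0 \<le> card (S \<inter> small_set \<epsilon> G n r)}"
    by (simp add: small_cluster_def L_def Suc_le_eq)
  thus ?thesis
    using prob_connected_with_small_le[OF n_def _ p_nonneg p_le_1[OF assms(1)] weight(1) _ threshold_ge_eta,
        of k0 "ln L"]
      cluster_sum_le[OF n_pos L_def p_eq assms(2) p_nonneg p_le_1[OF assms(1)] _ weight(1) _ hits cost assms(3)]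
      r_ge_3 weight(2)
    by simp
qed

lemma prob_dense_le:
  assumes "c1 * L \<le> exp L" "exp 1 * c1 / (100 * L) \<le> 1" "c1 ^ 100 / L ^ 98 \<le> 1/2"
  shows "measure_pmf.prob (Gnp_col n p r) (dense_spot n) \<le> 2 * (c1 ^ 100 / L ^ 98)"
  unfolding dense_spot_def L_def[symmetric]
  using prob_dense_subset_le[OF p_nonneg p_le_1[OF assms(1)], of r n "real n / L\<^sup>2"]
    dense_sum_le[OF n_pos L_pos p_eq c1_pos assms(2,3)] r_ge_3
  by simp

end

section \<open>Limits\<close>

lemma tendsto_zero_by_eventual_bound:
  fixes g :: "nat \<Rightarrow> real" and f :: "real \<Rightarrow> real"
  assumes r: "r > 0" and f: "(f \<longlongrightarrow> 0) at_top" and Q: "\<forall>\<^sub>F L in at_top. Q L"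
    and bound: "\<And>k. k \<ge> 2 \<Longrightarrow> Q (ln (real (r * k))) \<Longrightarrow> g k \<le> f (ln (real (r * k)))"
    and nonneg: "\<And>k. 0 \<le> g k"
  shows "g \<longlonglongrightarrow> 0"
proof -
  have "filterlim (\<lambda>k. real r * real k) at_top sequentially"
    using r by (intro filterlim_tendsto_pos_mult_at_top[OF tendsto_const _ filterlim_real_sequentially]) auto
  hence "filterlim (\<lambda>k. real (r * k)) at_top sequentially" by simp
  from filterlim_compose[OF ln_at_top this]
  have lnL: "filterlim (\<lambda>k. ln (real (r * k))) at_top sequentially" .
  have "\<forall>\<^sub>F k in sequentially. Q (ln (real (r * k)))"
    using lnL Q by (rule filterlim_iff[THEN iffD1, rule_format])
  hence upper: "\<forall>\<^sub>F k in sequentially. g k \<le> f (ln (real (r * k)))"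
    using eventually_ge_at_top[of 2] by eventually_elim (rule bound)
  have lower: "\<forall>\<^sub>F k in sequentially. 0 \<le> g k" by (simp add: nonneg)
  show ?thesis
    by (rule tendsto_sandwich[OF lower upper tendsto_const filterlim_compose[OF f lnL]])
qed

context
  fixes r :: nat and \<epsilon> :: real
  assumes r_ge_3: "r \<ge> 3" and eps_pos: "0 < \<epsilon>" and eps_small: "\<epsilon> \<le> 1 / (4 * (real (r * alpha_r r + 1))\<^sup>2)"
begin

lemma sparse_regimeI: "k \<ge> 2 \<Longrightarrow> sparse_regime r k \<epsilon>"
  using r_ge_3 eps_pos eps_small by (simp add: sparse_regime_def)

lemma prob_many_small_tendsto_0:
  "(\<lambda>k. measure_pmf.prob (Gnp_col (r * k) ((1 + \<epsilon>) * p_r r (r * k)) r) (many_small \<epsilon> (r * k) r))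
     \<longlonglongrightarrow> 0"
proof -
  define a where "a = 1 / (8 * (real r * real (alpha_r r)))"
  define c where "c = (1 + \<epsilon>) * real r / real (alpha_r r)"
  have "a > 0" "c > 0" using alpha_r_ge_2[OF r_ge_3] r_ge_3 eps_pos by (simp_all add: a_def c_def)
  show ?thesis
  proof (rule tendsto_zero_by_eventual_bound)
    show "((\<lambda>L. real r * exp (- a * L)) \<longlongrightarrow> 0) at_top" using \<open>a > 0\<close> by real_asymp
    show "\<forall>\<^sub>F L in at_top. c * L \<le> exp L" using \<open>c > 0\<close> by real_asymp
    fix k :: nat assume "k \<ge> 2" "c * ln (real (r * k)) \<le> exp (ln (real (r * k)))"
    interpret sparse_regime r k \<epsilon> using \<open>k \<ge> 2\<close> by (rule sparse_regimeI)
    show "measure_pmf.prob (Gnp_col (r * k) ((1 + \<epsilon>) * p_r r (r * k)) r) (many_small \<epsilon> (r * k) r)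
        \<le> real r * exp (- a * ln (real (r * k)))"
      using \<open>c * ln (real (r * k)) \<le> _\<close> unfolding a_def c_def
      by (rule prob_many_small_le[unfolded n_def p_def L_def c1_def ra_def])
  qed (use r_ge_3 in auto)
qed

lemma prob_small_cluster_tendsto_0:
  "(\<lambda>k. measure_pmf.prob (Gnp_col (r * k) ((1 + \<epsilon>) * p_r r (r * k)) r) (small_cluster \<epsilon> (r * k) r))
     \<longlonglongrightarrow> 0"
proof -
  define d where "d = 1 / (4 * (real r * real (alpha_r r)))"
  define c where "c = (1 + \<epsilon>) * real r / real (alpha_r r)"
  define k0 where "k0 = r * alpha_r r + 1"
  define C where "C = 2 * exp (real k0) * c"
  have "d > 0" "c > 0" "C > 0"
    using alpha_r_ge_2[OF r_ge_3] r_ge_3 eps_pos by (simp_all add: d_def c_def C_def)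
  have "((\<lambda>L. ln L * (exp (- d * L) * (C * L * (ln L)\<^sup>2) powr ln L)) \<longlongrightarrow> 0) at_top"
    using \<open>d > 0\<close> \<open>C > 0\<close> by real_asymp
  hence "((\<lambda>L. ln L * (exp (- d * L) * (C * L * (ln L)\<^sup>2) powr ln L) * real r ^ k0) \<longlongrightarrow> 0) at_top"
    by (rule tendsto_mult_left_zero)
  hence lim: "((\<lambda>L. ln L * (real r ^ k0 * exp (- d * L) * (C * L * (ln L)\<^sup>2) powr ln L)) \<longlongrightarrow> 0) at_top"
    by (simp add: mult_ac)
  show ?thesis
  proof (rule tendsto_zero_by_eventual_bound[OF _ lim])
    show "\<forall>\<^sub>F L in at_top. c * L \<le> exp L \<and> 1 \<le> c * L \<and> 1 \<le> ln L"
      using \<open>c > 0\<close> by (intro eventually_conj; real_asymp)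
    fix k :: nat assume "k \<ge> 2" and
      Q: "c * ln (real (r * k)) \<le> exp (ln (real (r * k))) \<and> 1 \<le> c * ln (real (r * k)) \<and> 1 \<le> ln (ln (real (r * k)))"
    interpret sparse_regime r k \<epsilon> using \<open>k \<ge> 2\<close> by (rule sparse_regimeI)
    show "measure_pmf.prob (Gnp_col (r * k) ((1 + \<epsilon>) * p_r r (r * k)) r) (small_cluster \<epsilon> (r * k) r)
        \<le> ln (ln (real (r * k))) * (real r ^ k0 * exp (- d * ln (real (r * k)))
          * (C * ln (real (r * k)) * (ln (ln (real (r * k))))\<^sup>2) powr ln (ln (real (r * k))))"
      using Q unfolding d_def c_def C_def k0_def
      by (intro prob_small_cluster_le[unfolded n_def p_def L_def c1_def ra_def]) simp_all
  qed (use r_ge_3 in auto)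
qed

lemma prob_dense_spot_tendsto_0:
  "(\<lambda>k. measure_pmf.prob (Gnp_col (r * k) ((1 + \<epsilon>) * p_r r (r * k)) r) (dense_spot (r * k))) \<longlonglongrightarrow> 0"
proof -
  define c where "c = (1 + \<epsilon>) * real r / real (alpha_r r)"
  have "c > 0" using alpha_r_ge_2[OF r_ge_3] r_ge_3 eps_pos by (simp add: c_def)
  show ?thesis
  proof (rule tendsto_zero_by_eventual_bound)
    show "((\<lambda>L. 2 * (c ^ 100 / L ^ 98)) \<longlongrightarrow> 0) at_top" by real_asymp
    show "\<forall>\<^sub>F L in at_top. c * L \<le> exp L \<and> exp 1 * c / (100 * L) \<le> 1 \<and> c ^ 100 / L ^ 98 \<le> 1/2"
      using \<open>c > 0\<close> by (intro eventually_conj; real_asymp)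
    fix k :: nat assume "k \<ge> 2" and Q: "c * ln (real (r * k)) \<le> exp (ln (real (r * k)))
      \<and> exp 1 * c / (100 * ln (real (r * k))) \<le> 1 \<and> c ^ 100 / ln (real (r * k)) ^ 98 \<le> 1/2"
    interpret sparse_regime r k \<epsilon> using \<open>k \<ge> 2\<close> by (rule sparse_regimeI)
    show "measure_pmf.prob (Gnp_col (r * k) ((1 + \<epsilon>) * p_r r (r * k)) r) (dense_spot (r * k))
        \<le> 2 * (c ^ 100 / ln (real (r * k)) ^ 98)"
      using Q unfolding c_def
      by (intro prob_dense_le[unfolded n_def p_def L_def c1_def]) simp_all
  qed (use r_ge_3 in auto)
qed

end

lemma tendsto_prob_compl_Un3:
  assumes "(\<lambda>k. measure_pmf.prob (M k) (A k)) \<longlonglongrightarrow> 0" "(\<lambda>k. measure_pmf.prob (M k) (B k)) \<longlonglongrightarrow> 0"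
    "(\<lambda>k. measure_pmf.prob (M k) (C k)) \<longlonglongrightarrow> 0"
  shows "(\<lambda>k. measure_pmf.prob (M k) (- (A k \<union> B k \<union> C k))) \<longlonglongrightarrow> 1"
proof (rule tendsto_sandwich)
  let ?P = "\<lambda>k X. measure_pmf.prob (M k) X"
  have "(\<lambda>k. 1 - (?P k (A k) + ?P k (B k) + ?P k (C k))) \<longlonglongrightarrow> 1 - (0 + 0 + 0)"
    by (intro tendsto_intros assms)
  thus "(\<lambda>k. 1 - (?P k (A k) + ?P k (B k) + ?P k (C k))) \<longlonglongrightarrow> 1" by simp
  show "\<forall>\<^sub>F k in sequentially. 1 - (?P k (A k) + ?P k (B k) + ?P k (C k)) \<le> ?P k (- (A k \<union> B k \<union> C k))"
  proof (rule always_eventually, rule allI)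
    fix k
    have "?P k (A k \<union> B k \<union> C k) \<le> ?P k (A k) + ?P k (B k) + ?P k (C k)"
      using measure_Un_le[of "A k" "M k" "B k"] measure_Un_le[of "A k \<union> B k" "M k" "C k"] by simp
    thus "1 - (?P k (A k) + ?P k (B k) + ?P k (C k)) \<le> ?P k (- (A k \<union> B k \<union> C k))"
      using measure_pmf.prob_compl[of "A k \<union> B k \<union> C k" "M k"] by (simp add: Compl_eq_Diff_UNIV)
  qed
qed (auto intro: measure_pmf.prob_le_1)

lemma good_graphs_eq_compl:
  "{G. real (card (small_set \<epsilon> G n r)) \<le> real n powr (1 - \<epsilon> / (2 * real r * real (alpha_r r)))
       \<and> (\<forall>S \<subseteq> {1..n}. real (card S) \<le> ln (ln (real n)) \<and> induced_connected G S
             \<longrightarrow> card (S \<inter> small_set \<epsilon> G n r) \<le> r * alpha_r r)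
       \<and> (\<forall>S \<subseteq> {1..n}. real (card S) \<le> real n / (ln (real n))\<^sup>2 \<longrightarrow> spanned_edges G S \<le> 100 * card S)}
   = - (many_small \<epsilon> n r \<union> small_cluster \<epsilon> n r \<union> dense_spot n)"
  by (simp add: set_eq_iff many_small_def small_cluster_def dense_spot_def not_less) blast

theorem mainTheorem12:
  fixes r :: nat
  assumes "r \<ge> 3"
  shows "\<exists>\<epsilon>0 > 0. \<forall>\<epsilon>. 0 < \<epsilon> \<and> \<epsilon> < \<epsilon>0 \<longrightarrow>
    ((\<lambda>k. let n = r * k; p1 = (1 + \<epsilon>) * p_r r n;
              \<theta> = \<epsilon> / (2 * real r * real (alpha_r r)) in
       measure_pmf.prob (Gnp_col n p1 r)
         {G. real (card (small_set \<epsilon> G n r)) \<le> real n powr (1 - \<theta>)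
           \<and> (\<forall>S \<subseteq> {1..n}. real (card S) \<le> ln (ln (real n)) \<and> induced_connected G S
                 \<longrightarrow> card (S \<inter> small_set \<epsilon> G n r) \<le> r * alpha_r r)
           \<and> (\<forall>S \<subseteq> {1..n}. real (card S) \<le> real n / (ln (real n))\<^sup>2
                 \<longrightarrow> spanned_edges G S \<le> 100 * card S)})
     \<longlonglongrightarrow> 1)"
proof -
  define \<epsilon>0 :: real where "\<epsilon>0 = 1 / (4 * (real (r * alpha_r r + 1))\<^sup>2)"
  have "\<epsilon>0 > 0" unfolding \<epsilon>0_def by (simp del: of_nat_add of_nat_mult)
  have lim: "(\<lambda>k. measure_pmf.prob (Gnp_col (r * k) ((1 + \<epsilon>) * p_r r (r * k)) r)
      (- (many_small \<epsilon> (r * k) r \<union> small_cluster \<epsilon> (r * k) r \<union> dense_spot (r * k)))) \<longlonglongrightarrow> 1"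
    if "0 < \<epsilon>" "\<epsilon> < \<epsilon>0" for \<epsilon>
  proof -
    have \<epsilon>: "0 < \<epsilon>" "\<epsilon> \<le> 1 / (4 * (real (r * alpha_r r + 1))\<^sup>2)" using that by (simp_all add: \<epsilon>0_def)
    show ?thesis
      by (rule tendsto_prob_compl_Un3[OF prob_many_small_tendsto_0[OF assms \<epsilon>]
            prob_small_cluster_tendsto_0[OF assms \<epsilon>] prob_dense_spot_tendsto_0[OF assms \<epsilon>]])
  qed
  show ?thesis unfolding Let_def good_graphs_eq_compl
    using \<open>\<epsilon>0 > 0\<close> lim by blast
qed

end
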